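(* Let $\mathcal V$ be the self-attention velocity field. There exists $L_1=L_1(M,R)$, independent of $d$, such that $D_x\mathcal V$ is bounded in operator norm by $L_1$ and, for all $x,\tilde x\in B_R(0)$, all $\mu,\tilde\mu\in\mathcal P(\mathbb R^d)$ supported in $B_R(0)$, and all $\theta,\tilde\theta$ with $|\theta|,|\tilde\theta|\le M$, $$\|D_x\mathcal V(x,\mu;\theta)-D_x\mathcal V(\tilde x,\tilde\mu;\tilde\theta)\|\le L_1\big(|x-\tilde x|+\mathbf W_1(\mu,\tilde\mu)+|\theta-\tilde\theta|\big).$$
   Context: Self-attention velocity field: for $\theta=(Q,K,V)\in(\mathbb R^{d\times d})^3\cong\mathbb R^{3d^2}$ with $|\theta|$ the Euclidean (Frobenius) norm of the concatenation, $\mathcal V(x,\mu;\theta)=\frac{1}{Z(x)}\int_{\mathbb R^d}e^{\langle Qx,Ky\rangle}Vy\,d\mu(y)$ with $Z(x)=\int_{\mathbb R^d}e^{\langle Qx,Kz\rangle}\,d\mu(z)$. $B_r(0)$ is the Euclidean ball of radius $r$ in $\mathbb R^d$; $\mathbf W_1$ is the 1-Wasserstein distance; $\|\cdot\|$ is the operator norm; $D_x\mathcal V$ is the $d\times d$ Jacobian of $\mathcal V$ in $x$. *)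

theory Defs
  imports "HOL-Probability.Probability"
begin

text \<open>Explicit-dimension model of R^d (d is quantified inside the statement, so that the
constant can be independent of d). Points of R^d are the extensional functions
{..<d} -> real, i.e. the carrier of the product measure space PiM {..<d} (\<lambda>_. borel).
Matrices are functions nat => nat => real, only entries with indices < d being relevant.\<close>

definition vecs :: "nat \<Rightarrow> (nat \<Rightarrow> real) set" where
  "vecs d = PiE {..<d} (\<lambda>_. UNIV)"

definition Rd :: "nat \<Rightarrow> (nat \<Rightarrow> real) measure" where
  "Rd d = PiM {..<d} (\<lambda>_. borel)"

definition vinner :: "nat \<Rightarrow> (nat \<Rightarrow> real) \<Rightarrow> (nat \<Rightarrow> real) \<Rightarrow> real" where
  "vinner d x y = (\<Sum>i<d. x i * y i)"

definition vnorm :: "nat \<Rightarrow> (nat \<Rightarrow> real) \<Rightarrow> real" where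
  "vnorm d x = sqrt (\<Sum>i<d. (x i)\<^sup>2)"

definition vdist :: "nat \<Rightarrow> (nat \<Rightarrow> real) \<Rightarrow> (nat \<Rightarrow> real) \<Rightarrow> real" where
  "vdist d x y = sqrt (\<Sum>i<d. (x i - y i)\<^sup>2)"

definition mvmul :: "nat \<Rightarrow> (nat \<Rightarrow> nat \<Rightarrow> real) \<Rightarrow> (nat \<Rightarrow> real) \<Rightarrow> (nat \<Rightarrow> real)" where
  "mvmul d A v = (\<lambda>i\<in>{..<d}. \<Sum>j<d. A i j * v j)"

definition opnorm :: "nat \<Rightarrow> (nat \<Rightarrow> nat \<Rightarrow> real) \<Rightarrow> real" where
  "opnorm d A = Sup {vnorm d (mvmul d A v) | v. v \<in> vecs d \<and> vnorm d v \<le> 1}"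

type_synonym params = "(nat \<Rightarrow> nat \<Rightarrow> real) \<times> (nat \<Rightarrow> nat \<Rightarrow> real) \<times> (nat \<Rightarrow> nat \<Rightarrow> real)"

definition pdist :: "nat \<Rightarrow> params \<Rightarrow> params \<Rightarrow> real" where
  "pdist d \<theta> \<theta>' = (case (\<theta>, \<theta>') of ((Q,K,V), (Q',K',V')) \<Rightarrow>
     sqrt (\<Sum>i<d. \<Sum>j<d. (Q i j - Q' i j)\<^sup>2 + (K i j - K' i j)\<^sup>2 + (V i j - V' i j)\<^sup>2))"

definition pnorm :: "nat \<Rightarrow> params \<Rightarrow> real" where
  "pnorm d \<theta> = pdist d \<theta> (\<lambda>_ _. 0, \<lambda>_ _. 0, \<lambda>_ _. 0)"

definition prob_supp :: "nat \<Rightarrow> real \<Rightarrow> (nat \<Rightarrow> real) measure \<Rightarrow> bool" where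
  "prob_supp d R \<mu> \<longleftrightarrow> prob_space \<mu> \<and> sets \<mu> = sets (Rd d) \<and>
     emeasure \<mu> {y \<in> space (Rd d). R < vnorm d y} = 0"

definition couplings :: "nat \<Rightarrow> (nat \<Rightarrow> real) measure \<Rightarrow> (nat \<Rightarrow> real) measure
    \<Rightarrow> ((nat \<Rightarrow> real) \<times> (nat \<Rightarrow> real)) measure set" where
  "couplings d \<mu> \<nu> = {\<pi>. prob_space \<pi> \<and> sets \<pi> = sets (Rd d \<Otimes>\<^sub>M Rd d) \<and>
     distr \<pi> (Rd d) fst = \<mu> \<and> distr \<pi> (Rd d) snd = \<nu>}"

definition W1 :: "nat \<Rightarrow> (nat \<Rightarrow> real) measure \<Rightarrow> (nat \<Rightarrow> real) measure \<Rightarrow> real" where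
  "W1 d \<mu> \<nu> = enn2real (INF \<pi>\<in>couplings d \<mu> \<nu>. \<integral>\<^sup>+ p. ennreal (vdist d (fst p) (snd p)) \<partial>\<pi>)"

definition attn :: "nat \<Rightarrow> (nat \<Rightarrow> real) \<Rightarrow> (nat \<Rightarrow> real) measure \<Rightarrow> params \<Rightarrow> (nat \<Rightarrow> real)" where
  "attn d x \<mu> \<theta> = (case \<theta> of (Q,K,V) \<Rightarrow>
     (\<lambda>i\<in>{..<d}.
        (\<integral>y. exp (vinner d (mvmul d Q x) (mvmul d K y)) * mvmul d V y i \<partial>\<mu>)
        / (\<integral>z. exp (vinner d (mvmul d Q x) (mvmul d K z)) \<partial>\<mu>)))"

definition DxV :: "nat \<Rightarrow> (nat \<Rightarrow> real) \<Rightarrow> (nat \<Rightarrow> real) measure \<Rightarrow> params \<Rightarrow> (nat \<Rightarrow> nat \<Rightarrow> real)" where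
  "DxV d x \<mu> \<theta> = (\<lambda>i j. deriv (\<lambda>t. attn d (x(j := t)) \<mu> \<theta> i) (x j))"

end

(*
  D_x V(x, mu; theta) is the covariance, under the Gibbs measure with density proportional to
  exp <Qx, Ky> with respect to mu, of the value V y and of the x-gradient Q^T K y of the score.
  On the relevant balls every Gibbs integrand (the weight, and the weight times V y, Q^T K y or
  their outer product) is bounded and Lipschitz in (theta, x, y) with constants depending only
  on M and R. Along any coupling of mu and mu', two integrals of such an integrand differ by at
  most its Lipschitz constant times the transport cost, hence by that constant times W1; the
  normaliser is bounded away from zero; and differences, products and quotients preserve being
  bounded and Lipschitz. All estimates use Euclidean and Frobenius norms, which dominate the
  operator norm without a dimension-dependent factor, so no constant depends on d.
*)

theory Submission
  imports Defs
begin

section \<open>Euclidean and Frobenius norms\<close>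

lemma L2_set_unit [simp]: "L2_set f {()} = \<bar>f ()\<bar>"
  by (simp add: L2_set_def)

lemma L2_set_scale: "L2_set (\<lambda>k. c * f k) I = \<bar>c\<bar> * L2_set f I"
  by (simp add: L2_set_def power_mult_distrib real_sqrt_mult flip: sum_distrib_left)

lemma L2_set_diff_le: "L2_set (\<lambda>k. f k - g k) I \<le> L2_set f I + L2_set g I"
proof -
  have "L2_set (\<lambda>k. - g k) I = L2_set g I"
    by (simp add: L2_set_def)
  then show ?thesis
    using L2_set_triangle_ineq[of f "\<lambda>k. - g k" I] by simp
qed

lemma L2_set_product: "L2_set (\<lambda>(i, j). f i * g j) (I \<times> J) = L2_set f I * L2_set g J"
proof -
  have "(\<Sum>k\<in>I \<times> J. ((\<lambda>(i, j). f i * g j) k)\<^sup>2) = (\<Sum>i\<in>I. (f i)\<^sup>2) * (\<Sum>j\<in>J. (g j)\<^sup>2)"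
    by (simp add: sum.cartesian_product power_mult_distrib case_prod_beta' sum_product)
  then show ?thesis
    by (simp add: L2_set_def real_sqrt_mult)
qed

lemma abs_le_L2_set: "finite I \<Longrightarrow> k \<in> I \<Longrightarrow> \<bar>f k\<bar> \<le> L2_set f I"
  using member_le_L2_set[of I k "\<lambda>k. \<bar>f k\<bar>"] by (simp add: L2_set_def)

lemma vnorm_eq_L2_set: "vnorm d x = L2_set x {..<d}"
  by (simp add: vnorm_def L2_set_def)

lemma vdist_eq_L2_set: "vdist d x y = L2_set (\<lambda>i. x i - y i) {..<d}"
  by (simp add: vdist_def L2_set_def)

lemma vdist_nonneg: "0 \<le> vdist d x y"
  by (simp add: vdist_eq_L2_set)

lemma vdist_le_vnorm_add: "vdist d x y \<le> vnorm d x + vnorm d y"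
  unfolding vdist_eq_L2_set vnorm_eq_L2_set by (rule L2_set_diff_le)

lemma abs_vinner_le: "\<bar>vinner d u v\<bar> \<le> L2_set u {..<d} * L2_set v {..<d}"
proof -
  have "\<bar>vinner d u v\<bar> \<le> (\<Sum>i<d. \<bar>u i\<bar> * \<bar>v i\<bar>)"
    unfolding vinner_def by (rule order_trans[OF sum_abs]) (simp add: abs_mult)
  also have "\<dots> \<le> L2_set u {..<d} * L2_set v {..<d}"
    by (rule L2_set_mult_ineq)
  finally show ?thesis .
qed

lemma L2_set_mvmul_le:
  "L2_set (mvmul d A v) {..<d} \<le> L2_set (case_prod A) ({..<d} \<times> {..<d}) * L2_set v {..<d}"
proof -
  have "(\<Sum>i<d. (mvmul d A v i)\<^sup>2) \<le> (\<Sum>i<d. (\<Sum>j<d. (A i j)\<^sup>2) * (\<Sum>j<d. (v j)\<^sup>2))"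
    by (intro sum_mono) (simp add: mvmul_def Cauchy_Schwarz_ineq_sum)
  also have "\<dots> = (\<Sum>i<d. \<Sum>j<d. (A i j)\<^sup>2) * (\<Sum>j<d. (v j)\<^sup>2)"
    by (rule sum_distrib_right[symmetric])
  finally have "sqrt (\<Sum>i<d. (mvmul d A v i)\<^sup>2) \<le> sqrt (\<Sum>i<d. \<Sum>j<d. (A i j)\<^sup>2) * sqrt (\<Sum>j<d. (v j)\<^sup>2)"
    unfolding real_sqrt_mult[symmetric] by (rule real_sqrt_le_mono)
  then show ?thesis
    by (simp add: L2_set_def sum.cartesian_product case_prod_beta')
qed

lemma opnorm_le_L2_set: "opnorm d A \<le> L2_set (case_prod A) ({..<d} \<times> {..<d})"
  unfolding opnorm_def
proof (rule cSup_least)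
  have "(\<lambda>i\<in>{..<d}. 0) \<in> vecs d \<and> vnorm d (\<lambda>i\<in>{..<d}. 0) \<le> 1"
    by (simp add: vecs_def vnorm_def)
  then show "{vnorm d (mvmul d A v) |v. v \<in> vecs d \<and> vnorm d v \<le> 1} \<noteq> {}"
    by blast
next
  fix r assume "r \<in> {vnorm d (mvmul d A v) |v. v \<in> vecs d \<and> vnorm d v \<le> 1}"
  then obtain v where r: "r = vnorm d (mvmul d A v)" and v: "vnorm d v \<le> 1"
    by blast
  have "r \<le> L2_set (case_prod A) ({..<d} \<times> {..<d}) * vnorm d v"
    unfolding r vnorm_eq_L2_set by (rule L2_set_mvmul_le)
  also have "\<dots> \<le> L2_set (case_prod A) ({..<d} \<times> {..<d})"
    using v by (simp add: mult_left_le)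
  finally show "r \<le> L2_set (case_prod A) ({..<d} \<times> {..<d})" .
qed

section \<open>Families bounded and Lipschitz uniformly in the dimension\<close>

text \<open>A family assigns to each dimension \<open>d\<close> and point \<open>p \<in> P d\<close> a vector indexed by \<open>I d\<close>:
  \<open>{()}\<close> for scalars, \<open>{..<d}\<close> for vectors, \<open>{..<d} \<times> {..<d}\<close> for matrices.\<close>

definition uniformly_bounded_lipschitz ::
    "(nat \<Rightarrow> 'p set) \<Rightarrow> (nat \<Rightarrow> 'p \<Rightarrow> 'p \<Rightarrow> real) \<Rightarrow> (nat \<Rightarrow> 'i set)
      \<Rightarrow> (nat \<Rightarrow> 'p \<Rightarrow> 'i \<Rightarrow> real) \<Rightarrow> bool" where
  "uniformly_bounded_lipschitz P \<delta> I f \<longleftrightarrow> (\<exists>B K. 0 \<le> B \<and> 0 \<le> K \<and>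
     (\<forall>d. \<forall>p\<in>P d. L2_set (f d p) (I d) \<le> B) \<and>
     (\<forall>d. \<forall>p\<in>P d. \<forall>q\<in>P d. L2_set (\<lambda>k. f d p k - f d q k) (I d) \<le> K * \<delta> d p q))"

lemma uniformly_bounded_lipschitzI:
  assumes "0 \<le> B" "0 \<le> K"
    and "\<And>d p. p \<in> P d \<Longrightarrow> L2_set (f d p) (I d) \<le> B"
    and "\<And>d p q. p \<in> P d \<Longrightarrow> q \<in> P d \<Longrightarrow> L2_set (\<lambda>k. f d p k - f d q k) (I d) \<le> K * \<delta> d p q"
  shows "uniformly_bounded_lipschitz P \<delta> I f"
  using assms unfolding uniformly_bounded_lipschitz_def by blast

lemma uniformly_bounded_lipschitzE:
  assumes "uniformly_bounded_lipschitz P \<delta> I f"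
  obtains B K where "0 \<le> B" "0 \<le> K"
    and "\<And>d p. p \<in> P d \<Longrightarrow> L2_set (f d p) (I d) \<le> B"
    and "\<And>d p q. p \<in> P d \<Longrightarrow> q \<in> P d \<Longrightarrow> L2_set (\<lambda>k. f d p k - f d q k) (I d) \<le> K * \<delta> d p q"
  using assms unfolding uniformly_bounded_lipschitz_def by blast

lemma uniformly_bounded_lipschitz_cong:
  assumes f: "uniformly_bounded_lipschitz P \<delta> I f"
    and eq: "\<And>d p k. p \<in> P d \<Longrightarrow> k \<in> I d \<Longrightarrow> g d p k = f d p k"
  shows "uniformly_bounded_lipschitz P \<delta> I g"
proof -
  obtain B K where "0 \<le> B" "0 \<le> K"
    and "\<And>d p. p \<in> P d \<Longrightarrow> L2_set (f d p) (I d) \<le> B"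
    and "\<And>d p q. p \<in> P d \<Longrightarrow> q \<in> P d \<Longrightarrow> L2_set (\<lambda>k. f d p k - f d q k) (I d) \<le> K * \<delta> d p q"
    using f by (elim uniformly_bounded_lipschitzE) blast
  moreover have "L2_set (g d p) (I d) = L2_set (f d p) (I d)" if "p \<in> P d" for d p
    using eq that by (intro L2_set_cong) auto
  moreover have "L2_set (\<lambda>k. g d p k - g d q k) (I d) = L2_set (\<lambda>k. f d p k - f d q k) (I d)"
    if "p \<in> P d" "q \<in> P d" for d p q
    using eq that by (intro L2_set_cong) auto
  ultimately show ?thesis
    by (intro uniformly_bounded_lipschitzI[of B K]) auto
qed

lemma uniformly_bounded_lipschitz_abs_le:
  assumes "uniformly_bounded_lipschitz P \<delta> I f"
  obtains B where "\<And>d p k. p \<in> P d \<Longrightarrow> finite (I d) \<Longrightarrow> k \<in> I d \<Longrightarrow> \<bar>f d p k\<bar> \<le> B"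
proof -
  obtain B where bound: "\<And>d p. p \<in> P d \<Longrightarrow> L2_set (f d p) (I d) \<le> B"
    using assms by (elim uniformly_bounded_lipschitzE) blast
  show thesis
  proof (rule that)
    fix d p k assume "p \<in> P d" "finite (I d)" "k \<in> I d"
    then show "\<bar>f d p k\<bar> \<le> B"
      using abs_le_L2_set[of "I d" k "f d p"] bound[of p d] by linarith
  qed
qed

lemma uniformly_bounded_lipschitz_one: "uniformly_bounded_lipschitz P \<delta> (\<lambda>_. {()}) (\<lambda>d p _. 1)"
  by (rule uniformly_bounded_lipschitzI[of 1 0]) auto

lemma uniformly_bounded_lipschitz_diff:
  assumes "uniformly_bounded_lipschitz P \<delta> I f" and "uniformly_bounded_lipschitz P \<delta> I g"
  shows "uniformly_bounded_lipschitz P \<delta> I (\<lambda>d p k. f d p k - g d p k)"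
proof -
  obtain Bf Kf where f: "0 \<le> Bf" "0 \<le> Kf"
    "\<And>d p. p \<in> P d \<Longrightarrow> L2_set (f d p) (I d) \<le> Bf"
    "\<And>d p q. p \<in> P d \<Longrightarrow> q \<in> P d \<Longrightarrow> L2_set (\<lambda>k. f d p k - f d q k) (I d) \<le> Kf * \<delta> d p q"
    using assms(1) by (elim uniformly_bounded_lipschitzE) blast
  obtain Bg Kg where g: "0 \<le> Bg" "0 \<le> Kg"
    "\<And>d p. p \<in> P d \<Longrightarrow> L2_set (g d p) (I d) \<le> Bg"
    "\<And>d p q. p \<in> P d \<Longrightarrow> q \<in> P d \<Longrightarrow> L2_set (\<lambda>k. g d p k - g d q k) (I d) \<le> Kg * \<delta> d p q"
    using assms(2) by (elim uniformly_bounded_lipschitzE) blast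
  show ?thesis
  proof (rule uniformly_bounded_lipschitzI[of "Bf + Bg" "Kf + Kg"])
    fix d p assume p: "p \<in> P d"
    show "L2_set (\<lambda>k. f d p k - g d p k) (I d) \<le> Bf + Bg"
      by (rule order_trans[OF L2_set_diff_le add_mono[OF f(3)[OF p] g(3)[OF p]]])
  next
    fix d p q assume pq: "p \<in> P d" "q \<in> P d"
    have "L2_set (\<lambda>k. (f d p k - g d p k) - (f d q k - g d q k)) (I d)
        = L2_set (\<lambda>k. (f d p k - f d q k) - (g d p k - g d q k)) (I d)"
      by (rule L2_set_cong) auto
    also have "\<dots> \<le> L2_set (\<lambda>k. f d p k - f d q k) (I d) + L2_set (\<lambda>k. g d p k - g d q k) (I d)"
      by (rule L2_set_diff_le)
    also have "\<dots> \<le> Kf * \<delta> d p q + Kg * \<delta> d p q"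
      using f(4)[OF pq] g(4)[OF pq] by (rule add_mono)
    finally show "L2_set (\<lambda>k. (f d p k - g d p k) - (f d q k - g d q k)) (I d) \<le> (Kf + Kg) * \<delta> d p q"
      by (simp add: distrib_right)
  qed (use f g in auto)
qed

lemma uniformly_bounded_lipschitz_bilinear:
  fixes b :: "nat \<Rightarrow> ('i \<Rightarrow> real) \<Rightarrow> ('j \<Rightarrow> real) \<Rightarrow> 'k \<Rightarrow> real"
  assumes "uniformly_bounded_lipschitz P \<delta> I f" and "uniformly_bounded_lipschitz P \<delta> J g"
    and split: "\<And>d u u' v v' k. k \<in> H d \<Longrightarrow>
      b d u v k - b d u' v' k = b d (\<lambda>i. u i - u' i) v k + b d u' (\<lambda>j. v j - v' j) k"
    and norm: "\<And>d u v. L2_set (b d u v) (H d) \<le> L2_set u (I d) * L2_set v (J d)"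
  shows "uniformly_bounded_lipschitz P \<delta> H (\<lambda>d p. b d (f d p) (g d p))"
proof -
  obtain Bf Kf where f: "0 \<le> Bf" "0 \<le> Kf"
    "\<And>d p. p \<in> P d \<Longrightarrow> L2_set (f d p) (I d) \<le> Bf"
    "\<And>d p q. p \<in> P d \<Longrightarrow> q \<in> P d \<Longrightarrow> L2_set (\<lambda>k. f d p k - f d q k) (I d) \<le> Kf * \<delta> d p q"
    using assms(1) by (elim uniformly_bounded_lipschitzE) blast
  obtain Bg Kg where g: "0 \<le> Bg" "0 \<le> Kg"
    "\<And>d p. p \<in> P d \<Longrightarrow> L2_set (g d p) (J d) \<le> Bg"
    "\<And>d p q. p \<in> P d \<Longrightarrow> q \<in> P d \<Longrightarrow> L2_set (\<lambda>k. g d p k - g d q k) (J d) \<le> Kg * \<delta> d p q"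
    using assms(2) by (elim uniformly_bounded_lipschitzE) blast
  show ?thesis
  proof (rule uniformly_bounded_lipschitzI[of "Bf * Bg" "Kf * Bg + Bf * Kg"])
    fix d p assume "p \<in> P d"
    then show "L2_set (b d (f d p) (g d p)) (H d) \<le> Bf * Bg"
      using norm f(3) g(3) by (meson L2_set_nonneg mult_mono order_trans)
  next
    fix d p q assume pq: "p \<in> P d" "q \<in> P d"
    let ?df = "\<lambda>i. f d p i - f d q i" and ?dg = "\<lambda>j. g d p j - g d q j"
    have "L2_set (\<lambda>k. b d (f d p) (g d p) k - b d (f d q) (g d q) k) (H d)
        = L2_set (\<lambda>k. b d ?df (g d p) k + b d (f d q) ?dg k) (H d)"
      using split by (intro L2_set_cong) auto
    also have "\<dots> \<le> L2_set (b d ?df (g d p)) (H d) + L2_set (b d (f d q) ?dg) (H d)"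
      by (rule L2_set_triangle_ineq)
    also have "\<dots> \<le> L2_set ?df (I d) * L2_set (g d p) (J d) + L2_set (f d q) (I d) * L2_set ?dg (J d)"
      by (intro add_mono norm)
    also have "\<dots> \<le> (Kf * \<delta> d p q) * Bg + Bf * (Kg * \<delta> d p q)"
      using f(1,3,4) g(3,4) pq order_trans[OF L2_set_nonneg f(4)[OF pq]]
      by (intro add_mono mult_mono) auto
    finally show "L2_set (\<lambda>k. b d (f d p) (g d p) k - b d (f d q) (g d q) k) (H d)
        \<le> (Kf * Bg + Bf * Kg) * \<delta> d p q"
      by (simp add: algebra_simps)
  qed (use f g in auto)
qed

lemma uniformly_bounded_lipschitz_scale:
  assumes "uniformly_bounded_lipschitz P \<delta> (\<lambda>_. {()}) s" and "uniformly_bounded_lipschitz P \<delta> I f"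
  shows "uniformly_bounded_lipschitz P \<delta> I (\<lambda>d p k. s d p () * f d p k)"
  using uniformly_bounded_lipschitz_bilinear[OF assms, where b = "\<lambda>d a u k. a () * u k" and H = I]
  by (simp add: algebra_simps L2_set_scale)

lemma uniformly_bounded_lipschitz_outer:
  assumes "uniformly_bounded_lipschitz P \<delta> I f" and "uniformly_bounded_lipschitz P \<delta> J g"
  shows "uniformly_bounded_lipschitz P \<delta> (\<lambda>d. I d \<times> J d) (\<lambda>d p (i, j). f d p i * g d p j)"
  using uniformly_bounded_lipschitz_bilinear[OF assms,
      where b = "\<lambda>d u v (i, j). u i * v j" and H = "\<lambda>d. I d \<times> J d"]
  by (simp add: algebra_simps L2_set_product split: prod.splits)

lemma uniformly_bounded_lipschitz_vinner:
  assumes "uniformly_bounded_lipschitz P \<delta> (\<lambda>d. {..<d}) u"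
    and "uniformly_bounded_lipschitz P \<delta> (\<lambda>d. {..<d}) v"
  shows "uniformly_bounded_lipschitz P \<delta> (\<lambda>_. {()}) (\<lambda>d p _. vinner d (u d p) (v d p))"
proof (rule uniformly_bounded_lipschitz_bilinear[OF assms, where b = "\<lambda>d u v _. vinner d u v"])
  show "vinner d a b - vinner d a' b' = vinner d (\<lambda>i. a i - a' i) b + vinner d a' (\<lambda>j. b j - b' j)"
    for d a a' b b'
    by (simp add: vinner_def algebra_simps sum_subtractf)
qed (simp add: abs_vinner_le)

lemma uniformly_bounded_lipschitz_mvmul:
  assumes "uniformly_bounded_lipschitz P \<delta> (\<lambda>d. {..<d} \<times> {..<d}) (\<lambda>d p. case_prod (A d p))"
    and "uniformly_bounded_lipschitz P \<delta> (\<lambda>d. {..<d}) v"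
  shows "uniformly_bounded_lipschitz P \<delta> (\<lambda>d. {..<d}) (\<lambda>d p. mvmul d (A d p) (v d p))"
proof -
  have "uniformly_bounded_lipschitz P \<delta> (\<lambda>d. {..<d})
      (\<lambda>d p. mvmul d (curry (case_prod (A d p))) (v d p))"
  proof (rule uniformly_bounded_lipschitz_bilinear[OF assms, where b = "\<lambda>d A v. mvmul d (curry A) v"])
    show "mvmul d (curry a) b k - mvmul d (curry a') b' k
        = mvmul d (curry (\<lambda>i. a i - a' i)) b k + mvmul d (curry a') (\<lambda>j. b j - b' j) k"
      if "k \<in> {..<d}" for d a a' b b' k
      using that by (simp add: mvmul_def algebra_simps sum_subtractf)
    show "L2_set (mvmul d (curry a) b) {..<d} \<le> L2_set a ({..<d} \<times> {..<d}) * L2_set b {..<d}"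
      for d a b
      using L2_set_mvmul_le[of d "curry a" b] by simp
  qed
  then show ?thesis
    by simp
qed

lemma abs_exp_diff_le:
  fixes a b B :: real
  assumes "a \<le> B" "b \<le> B"
  shows "\<bar>exp a - exp b\<bar> \<le> exp B * \<bar>a - b\<bar>"
proof -
  have *: "exp q - exp p \<le> exp B * (q - p)" if "p \<le> q" "q \<le> B" for p q :: real
  proof -
    have "exp q - exp p = exp q * (1 - exp (p - q))"
      by (simp add: algebra_simps exp_diff)
    also have "\<dots> \<le> exp q * (q - p)"
      using exp_ge_add_one_self[of "p - q"] by (intro mult_left_mono) (auto simp: algebra_simps)
    also have "\<dots> \<le> exp B * (q - p)"
      using that by (intro mult_right_mono) auto
    finally show ?thesis .
  qed
  show ?thesis
    using *[of a b] *[of b a] assms by (cases "a \<le> b") (auto simp: abs_if)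
qed

lemma uniformly_bounded_lipschitz_exp:
  assumes "uniformly_bounded_lipschitz P \<delta> (\<lambda>_. {()}) s"
  shows "uniformly_bounded_lipschitz P \<delta> (\<lambda>_. {()}) (\<lambda>d p k. exp (s d p k))"
proof -
  obtain B K where "0 \<le> K"
    and s: "\<And>d p. p \<in> P d \<Longrightarrow> \<bar>s d p ()\<bar> \<le> B"
    and s_lip: "\<And>d p q. p \<in> P d \<Longrightarrow> q \<in> P d \<Longrightarrow> \<bar>s d p () - s d q ()\<bar> \<le> K * \<delta> d p q"
    using assms unfolding uniformly_bounded_lipschitz_def L2_set_unit by blast
  show ?thesis
  proof (rule uniformly_bounded_lipschitzI[of "exp B" "exp B * K"])
    fix d p q assume pq: "p \<in> P d" "q \<in> P d"
    have "\<bar>exp (s d p ()) - exp (s d q ())\<bar> \<le> exp B * \<bar>s d p () - s d q ()\<bar>"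
      using s[OF pq(1)] s[OF pq(2)] by (intro abs_exp_diff_le) auto
    also have "\<dots> \<le> exp B * (K * \<delta> d p q)"
      using s_lip[OF pq] by simp
    finally show "L2_set (\<lambda>k. exp (s d p k) - exp (s d q k)) {()} \<le> exp B * K * \<delta> d p q"
      by simp
  qed (use \<open>0 \<le> K\<close> s in \<open>auto simp: abs_le_iff\<close>)
qed

lemma uniformly_bounded_lipschitz_inverse:
  assumes "uniformly_bounded_lipschitz P \<delta> (\<lambda>_. {()}) z"
    and "0 < m" and z_ge: "\<And>d p. p \<in> P d \<Longrightarrow> m \<le> z d p ()"
  shows "uniformly_bounded_lipschitz P \<delta> (\<lambda>_. {()}) (\<lambda>d p k. 1 / z d p k)"
proof -
  obtain K where "0 \<le> K"
    and z_lip: "\<And>d p q. p \<in> P d \<Longrightarrow> q \<in> P d \<Longrightarrow> \<bar>z d p () - z d q ()\<bar> \<le> K * \<delta> d p q"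
    using assms(1) unfolding uniformly_bounded_lipschitz_def L2_set_unit by blast
  show ?thesis
  proof (rule uniformly_bounded_lipschitzI[of "1 / m" "K / (m * m)"])
    fix d p assume "p \<in> P d"
    then show "L2_set (\<lambda>k. 1 / z d p k) {()} \<le> 1 / m"
      using z_ge[of p d] \<open>0 < m\<close> by (simp add: frac_le)
  next
    fix d p q assume pq: "p \<in> P d" "q \<in> P d"
    have m: "m \<le> z d p ()" "m \<le> z d q ()"
      using z_ge pq by auto
    have "\<bar>1 / z d p () - 1 / z d q ()\<bar> = \<bar>z d p () - z d q ()\<bar> / (z d p () * z d q ())"
      using m \<open>0 < m\<close> by (simp add: field_simps abs_div)
    also have "\<dots> \<le> (K * \<delta> d p q) / (m * m)"
      using m \<open>0 < m\<close> z_lip[OF pq] by (intro frac_le mult_mono) auto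
    finally show "L2_set (\<lambda>k. 1 / z d p k - 1 / z d q k) {()} \<le> K / (m * m) * \<delta> d p q"
      by simp
  qed (use \<open>0 < m\<close> \<open>0 \<le> K\<close> in auto)
qed

section \<open>The attention kernel\<close>

definition qmat :: "params \<Rightarrow> nat \<Rightarrow> nat \<Rightarrow> real" where
  "qmat \<theta> = fst \<theta>"

definition kmat :: "params \<Rightarrow> nat \<Rightarrow> nat \<Rightarrow> real" where
  "kmat \<theta> = fst (snd \<theta>)"

definition vmat :: "params \<Rightarrow> nat \<Rightarrow> nat \<Rightarrow> real" where
  "vmat \<theta> = snd (snd \<theta>)"

definition score :: "nat \<Rightarrow> params \<Rightarrow> (nat \<Rightarrow> real) \<Rightarrow> (nat \<Rightarrow> real) \<Rightarrow> real" where
  "score d \<theta> x y = vinner d (mvmul d (qmat \<theta>) x) (mvmul d (kmat \<theta>) y)"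

definition score_grad :: "nat \<Rightarrow> params \<Rightarrow> (nat \<Rightarrow> real) \<Rightarrow> nat \<Rightarrow> real" where
  "score_grad d \<theta> y = mvmul d (\<lambda>i j. qmat \<theta> j i) (mvmul d (kmat \<theta>) y)"

definition kernel_dom :: "real \<Rightarrow> real \<Rightarrow> nat \<Rightarrow> (params \<times> (nat \<Rightarrow> real) \<times> (nat \<Rightarrow> real)) set" where
  "kernel_dom M R d = {(\<theta>, x, y). pnorm d \<theta> \<le> M \<and> vnorm d x \<le> R \<and> vnorm d y \<le> R}"

definition kernel_dist :: "nat \<Rightarrow> params \<times> (nat \<Rightarrow> real) \<times> (nat \<Rightarrow> real)
    \<Rightarrow> params \<times> (nat \<Rightarrow> real) \<times> (nat \<Rightarrow> real) \<Rightarrow> real" where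
  "kernel_dist d = (\<lambda>(\<theta>, x, y) (\<theta>', x', y'). vdist d x x' + pdist d \<theta> \<theta>' + vdist d y y')"

lemma pdist_nonneg: "0 \<le> pdist d \<theta> \<theta>'"
  by (auto simp: pdist_def intro!: sum_nonneg split: prod.splits)

lemma vdist_self [simp]: "vdist d x x = 0"
  by (simp add: vdist_def)

lemma pdist_self [simp]: "pdist d \<theta> \<theta> = 0"
  by (simp add: pdist_def split: prod.splits)

lemma L2_set_matrix_diff_le_pdist:
  "L2_set (\<lambda>(i, j). qmat \<theta> i j - qmat \<theta>' i j) ({..<d} \<times> {..<d}) \<le> pdist d \<theta> \<theta>'"
  "L2_set (\<lambda>(i, j). kmat \<theta> i j - kmat \<theta>' i j) ({..<d} \<times> {..<d}) \<le> pdist d \<theta> \<theta>'"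
  "L2_set (\<lambda>(i, j). vmat \<theta> i j - vmat \<theta>' i j) ({..<d} \<times> {..<d}) \<le> pdist d \<theta> \<theta>'"
  "L2_set (\<lambda>(i, j). qmat \<theta> j i - qmat \<theta>' j i) ({..<d} \<times> {..<d}) \<le> pdist d \<theta> \<theta>'"
proof -
  have pairs: "L2_set (\<lambda>(i, j). f i j) ({..<d} \<times> {..<d}) = sqrt (\<Sum>i<d. \<Sum>j<d. (f i j)\<^sup>2)"
    for f :: "nat \<Rightarrow> nat \<Rightarrow> real"
    by (simp add: L2_set_def sum.cartesian_product case_prod_beta')
  have swap: "(\<Sum>i<d. \<Sum>j<d. (f j i)\<^sup>2) = (\<Sum>i<d. \<Sum>j<d. (f i j)\<^sup>2)" for f :: "nat \<Rightarrow> nat \<Rightarrow> real"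
    by (rule sum.swap)
  obtain Q K V Q' K' V' where \<theta>: "\<theta> = (Q, K, V)" "\<theta>' = (Q', K', V')"
    by (cases \<theta>, cases \<theta>') auto
  show
    "L2_set (\<lambda>(i, j). qmat \<theta> i j - qmat \<theta>' i j) ({..<d} \<times> {..<d}) \<le> pdist d \<theta> \<theta>'"
    "L2_set (\<lambda>(i, j). kmat \<theta> i j - kmat \<theta>' i j) ({..<d} \<times> {..<d}) \<le> pdist d \<theta> \<theta>'"
    "L2_set (\<lambda>(i, j). vmat \<theta> i j - vmat \<theta>' i j) ({..<d} \<times> {..<d}) \<le> pdist d \<theta> \<theta>'"
    "L2_set (\<lambda>(i, j). qmat \<theta> j i - qmat \<theta>' j i) ({..<d} \<times> {..<d}) \<le> pdist d \<theta> \<theta>'"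
    unfolding pairs swap[of "\<lambda>i j. qmat \<theta> i j - qmat \<theta>' i j"]
    by (simp_all add: \<theta> qmat_def kmat_def vmat_def pdist_def; intro real_sqrt_le_mono sum_mono; simp)+
qed

lemma uniformly_bounded_lipschitz_kernel_matrix:
  assumes "\<And>d \<theta> \<theta>'. L2_set (\<lambda>(i, j). A \<theta> i j - A \<theta>' i j) ({..<d} \<times> {..<d}) \<le> pdist d \<theta> \<theta>'"
    and "A (\<lambda>_ _. 0, \<lambda>_ _. 0, \<lambda>_ _. 0) = (\<lambda>_ _. 0)"
  shows "uniformly_bounded_lipschitz (kernel_dom M R) kernel_dist (\<lambda>d. {..<d} \<times> {..<d})
    (\<lambda>d p. case_prod (A (fst p)))"
proof (rule uniformly_bounded_lipschitzI[of "\<bar>M\<bar>" 1])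
  fix d p assume "p \<in> kernel_dom M R d"
  then show "L2_set (case_prod (A (fst p))) ({..<d} \<times> {..<d}) \<le> \<bar>M\<bar>"
    using assms(1)[where d = d and \<theta> = "fst p" and \<theta>' = "(\<lambda>_ _. 0, \<lambda>_ _. 0, \<lambda>_ _. 0)"]
    by (auto simp: assms(2) kernel_dom_def pnorm_def case_prod_beta')
next
  fix d p q assume "p \<in> kernel_dom M R d" "q \<in> kernel_dom M R d"
  then show "L2_set (\<lambda>k. case_prod (A (fst p)) k - case_prod (A (fst q)) k) ({..<d} \<times> {..<d})
      \<le> 1 * kernel_dist d p q"
    using assms(1)[where d = d and \<theta> = "fst p" and \<theta>' = "fst q"]
    by (auto simp: kernel_dist_def vdist_eq_L2_set case_prod_beta' intro: order_trans)
qed auto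

lemma uniformly_bounded_lipschitz_kernel_points:
  "uniformly_bounded_lipschitz (kernel_dom M R) kernel_dist (\<lambda>d. {..<d}) (\<lambda>d p. fst (snd p))"
  "uniformly_bounded_lipschitz (kernel_dom M R) kernel_dist (\<lambda>d. {..<d}) (\<lambda>d p. snd (snd p))"
  by (rule uniformly_bounded_lipschitzI[of "\<bar>R\<bar>" 1];
      force simp: kernel_dom_def kernel_dist_def vnorm_eq_L2_set pdist_nonneg vdist_nonneg
        simp flip: vdist_eq_L2_set)+

lemma uniformly_bounded_lipschitz_score:
  "uniformly_bounded_lipschitz (kernel_dom M R) kernel_dist (\<lambda>_. {()}) (\<lambda>d (\<theta>, x, y) _. score d \<theta> x y)"
proof -
  have "uniformly_bounded_lipschitz (kernel_dom M R) kernel_dist (\<lambda>_. {()})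
      (\<lambda>d p _. vinner d (mvmul d (qmat (fst p)) (fst (snd p))) (mvmul d (kmat (fst p)) (snd (snd p))))"
    by (intro uniformly_bounded_lipschitz_vinner uniformly_bounded_lipschitz_mvmul
        uniformly_bounded_lipschitz_kernel_points uniformly_bounded_lipschitz_kernel_matrix
        L2_set_matrix_diff_le_pdist) (simp_all add: qmat_def kmat_def)
  then show ?thesis
    by (rule uniformly_bounded_lipschitz_cong) (simp add: score_def split: prod.splits)
qed

lemma uniformly_bounded_lipschitz_value:
  "uniformly_bounded_lipschitz (kernel_dom M R) kernel_dist (\<lambda>d. {..<d})
    (\<lambda>d (\<theta>, x, y). mvmul d (vmat \<theta>) y)"
proof -
  have "uniformly_bounded_lipschitz (kernel_dom M R) kernel_dist (\<lambda>d. {..<d})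
      (\<lambda>d p. mvmul d (vmat (fst p)) (snd (snd p)))"
    by (intro uniformly_bounded_lipschitz_mvmul uniformly_bounded_lipschitz_kernel_points
        uniformly_bounded_lipschitz_kernel_matrix L2_set_matrix_diff_le_pdist) (simp add: vmat_def)
  then show ?thesis
    by (rule uniformly_bounded_lipschitz_cong) (simp split: prod.splits)
qed

lemma uniformly_bounded_lipschitz_score_grad:
  "uniformly_bounded_lipschitz (kernel_dom M R) kernel_dist (\<lambda>d. {..<d})
    (\<lambda>d (\<theta>, x, y). score_grad d \<theta> y)"
proof -
  have "uniformly_bounded_lipschitz (kernel_dom M R) kernel_dist (\<lambda>d. {..<d})
      (\<lambda>d p. mvmul d (\<lambda>i j. qmat (fst p) j i) (mvmul d (kmat (fst p)) (snd (snd p))))"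
    by (intro uniformly_bounded_lipschitz_mvmul uniformly_bounded_lipschitz_kernel_points
        uniformly_bounded_lipschitz_kernel_matrix[where A = "\<lambda>\<theta> i j. qmat \<theta> j i"]
        uniformly_bounded_lipschitz_kernel_matrix L2_set_matrix_diff_le_pdist)
      (simp_all add: qmat_def kmat_def)
  then show ?thesis
    by (rule uniformly_bounded_lipschitz_cong) (simp add: score_grad_def split: prod.splits)
qed

lemma uniformly_bounded_lipschitz_one_kernel:
  "uniformly_bounded_lipschitz (kernel_dom M R) kernel_dist (\<lambda>_. {()}) (\<lambda>d (\<theta>, x, y) _. 1)"
  by (rule uniformly_bounded_lipschitz_cong[OF uniformly_bounded_lipschitz_one])
    (simp split: prod.splits)

lemma uniformly_bounded_lipschitz_gibbs_weighted:
  assumes "uniformly_bounded_lipschitz (kernel_dom M R) kernel_dist I (\<lambda>d (\<theta>, x, y). f d \<theta> y)"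
  shows "uniformly_bounded_lipschitz (kernel_dom M R) kernel_dist I
    (\<lambda>d (\<theta>, x, y) k. exp (score d \<theta> x y) * f d \<theta> y k)"
  using uniformly_bounded_lipschitz_scale[OF
      uniformly_bounded_lipschitz_exp[OF uniformly_bounded_lipschitz_score] assms]
  by (rule uniformly_bounded_lipschitz_cong) (simp split: prod.splits)

section \<open>Integration against measures supported in a ball\<close>

lemma measurable_Rd_component: "j < d \<Longrightarrow> (\<lambda>y. y j) \<in> borel_measurable (Rd d)"
  unfolding Rd_def by (rule measurable_component_singleton) simp

lemma borel_measurable_mvmul:
  assumes "\<And>j. j < d \<Longrightarrow> (\<lambda>y. f y j) \<in> borel_measurable N"
  shows "(\<lambda>y. mvmul d A (f y) i) \<in> borel_measurable N"
  unfolding mvmul_def using assms by (cases "i < d") (auto intro!: borel_measurable_sum)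

lemma borel_measurable_vinner:
  assumes "\<And>j. j < d \<Longrightarrow> (\<lambda>y. u y j) \<in> borel_measurable N"
    and "\<And>j. j < d \<Longrightarrow> (\<lambda>y. v y j) \<in> borel_measurable N"
  shows "(\<lambda>y. vinner d (u y) (v y)) \<in> borel_measurable N"
  unfolding vinner_def using assms by (auto intro!: borel_measurable_sum)

lemma borel_measurable_vnorm [measurable]: "vnorm d \<in> borel_measurable (Rd d)"
  unfolding vnorm_def[abs_def]
  by (intro measurable_compose[OF _ borel_measurable_sqrt] borel_measurable_sum
      borel_measurable_power measurable_Rd_component) simp

lemma borel_measurable_vdist_pair:
  "(\<lambda>p. vdist d (fst p) (snd p)) \<in> borel_measurable (Rd d \<Otimes>\<^sub>M Rd d)"
  unfolding vdist_def
  by (intro measurable_compose[OF _ borel_measurable_sqrt] borel_measurable_sum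
      borel_measurable_power borel_measurable_diff
      measurable_compose[OF measurable_fst measurable_Rd_component]
      measurable_compose[OF measurable_snd measurable_Rd_component]) simp_all

lemma prob_suppD:
  assumes "prob_supp d R \<mu>"
  shows "prob_space \<mu>" and "sets \<mu> = sets (Rd d)" and "AE y in \<mu>. vnorm d y \<le> R"
proof -
  show "prob_space \<mu>" and sets: "sets \<mu> = sets (Rd d)"
    using assms by (auto simp: prob_supp_def)
  have "{y \<in> space (Rd d). R < vnorm d y} \<in> sets \<mu>"
    unfolding sets by measurable
  then show "AE y in \<mu>. vnorm d y \<le> R"
    using assms sets_eq_imp_space_eq[OF sets]
    by (subst AE_iff_measurable) (auto simp: prob_supp_def not_le)
qed

lemma measurable_prob_supp:
  "prob_supp d R \<mu> \<Longrightarrow> f \<in> borel_measurable (Rd d) \<Longrightarrow> f \<in> borel_measurable \<mu>"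
  using measurable_cong_sets[OF prob_suppD(2) refl] by blast

lemma L2_set_integral_le:
  fixes h :: "'a \<Rightarrow> 'i \<Rightarrow> real"
  assumes "finite I" and h: "\<And>k. k \<in> I \<Longrightarrow> integrable N (\<lambda>y. h y k)"
    and \<phi>: "integrable N \<phi>" and le: "AE y in N. L2_set (h y) I \<le> \<phi> y"
  shows "L2_set (\<lambda>k. \<integral>y. h y k \<partial>N) I \<le> (\<integral>y. \<phi> y \<partial>N)"
proof -
  define u where "u k = (\<integral>y. h y k \<partial>N)" for k
  define S where "S = L2_set u I"
  have "AE y in N. 0 \<le> \<phi> y"
    using le by eventually_elim (rule order_trans[OF L2_set_nonneg])
  then have \<phi>_nonneg: "0 \<le> (\<integral>y. \<phi> y \<partial>N)"
    by (rule integral_nonneg_AE)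
  have "S * S = (\<Sum>k\<in>I. u k * u k)"
    by (simp add: S_def L2_set_def sum_nonneg power2_eq_square)
  also have "\<dots> = (\<Sum>k\<in>I. \<integral>y. u k * h y k \<partial>N)"
    by (simp add: u_def)
  also have "\<dots> = (\<integral>y. (\<Sum>k\<in>I. u k * h y k) \<partial>N)"
    using h by (intro Bochner_Integration.integral_sum[symmetric] integrable_mult_right)
  also have "\<dots> \<le> (\<integral>y. S * \<phi> y \<partial>N)"
  proof (rule integral_mono_AE)
    show "integrable N (\<lambda>y. \<Sum>k\<in>I. u k * h y k)"
      using h by (intro Bochner_Integration.integrable_sum integrable_mult_right)
    show "AE y in N. (\<Sum>k\<in>I. u k * h y k) \<le> S * \<phi> y"
      using le
    proof eventually_elim
      case (elim y)
      have "(\<Sum>k\<in>I. u k * h y k) \<le> (\<Sum>k\<in>I. \<bar>u k\<bar> * \<bar>h y k\<bar>)"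
        by (intro sum_mono) (metis abs_ge_self abs_mult)
      also have "\<dots> \<le> S * L2_set (h y) I"
        unfolding S_def by (rule L2_set_mult_ineq)
      also have "\<dots> \<le> S * \<phi> y"
        using elim by (intro mult_left_mono) (auto simp: S_def)
      finally show ?case .
    qed
  qed (use \<phi> in simp)
  also have "\<dots> = S * (\<integral>y. \<phi> y \<partial>N)"
    by simp
  finally have "S * S \<le> S * (\<integral>y. \<phi> y \<partial>N)" .
  moreover have "0 \<le> S"
    by (simp add: S_def)
  ultimately have "S \<le> (\<integral>y. \<phi> y \<partial>N)"
    using \<phi>_nonneg by (metis mult_left_le_imp_le order_less_le)
  then show ?thesis
    by (simp add: S_def u_def[abs_def])
qed

lemma integrable_if_L2_set_bounded:
  fixes h :: "'a \<Rightarrow> 'i \<Rightarrow> real"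
  assumes "finite_measure N" and I: "finite I" "k \<in> I"
    and "(\<lambda>y. h y k) \<in> borel_measurable N" and bound: "AE y in N. L2_set (h y) I \<le> B"
  shows "integrable N (\<lambda>y. h y k)"
proof -
  interpret finite_measure N by fact
  show ?thesis
  proof (rule integrable_const_bound[where B = B])
    show "AE y in N. norm (h y k) \<le> B"
      using bound by eventually_elim (metis abs_le_L2_set[OF I] order_trans real_norm_def)
  qed fact
qed

lemma L2_set_integral_le_const:
  fixes h :: "'a \<Rightarrow> 'i \<Rightarrow> real"
  assumes "prob_space N" "finite I" "\<And>k. (\<lambda>y. h y k) \<in> borel_measurable N"
    and "AE y in N. L2_set (h y) I \<le> B"
  shows "L2_set (\<lambda>k. \<integral>y. h y k \<partial>N) I \<le> B"
proof -
  interpret prob_space N by fact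
  have "L2_set (\<lambda>k. \<integral>y. h y k \<partial>N) I \<le> (\<integral>y. B \<partial>N)"
  proof (rule L2_set_integral_le[OF assms(2)])
    show "integrable N (\<lambda>y. h y k)" if "k \<in> I" for k
      using assms that by (intro integrable_if_L2_set_bounded) (auto simp: prob_space_def)
  qed (use assms in simp_all)
  then show ?thesis
    by (simp add: prob_space)
qed

lemma L2_set_integral_diff_le:
  fixes g g' :: "'a \<Rightarrow> 'i \<Rightarrow> real"
  assumes N: "prob_space N" and I: "finite I"
    and meas: "\<And>k. (\<lambda>y. g y k) \<in> borel_measurable N" "\<And>k. (\<lambda>y. g' y k) \<in> borel_measurable N"
    and bound: "AE y in N. L2_set (g y) I \<le> B" "AE y in N. L2_set (g' y) I \<le> B"
    and diff: "AE y in N. L2_set (\<lambda>k. g y k - g' y k) I \<le> \<delta>"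
  shows "L2_set (\<lambda>k. (\<integral>y. g y k \<partial>N) - (\<integral>y. g' y k \<partial>N)) I \<le> \<delta>"
proof -
  have fin: "finite_measure N"
    using N by (simp add: prob_space_def)
  have "L2_set (\<lambda>k. (\<integral>y. g y k \<partial>N) - (\<integral>y. g' y k \<partial>N)) I = L2_set (\<lambda>k. \<integral>y. g y k - g' y k \<partial>N) I"
    using integrable_if_L2_set_bounded[OF fin I _ meas(1) bound(1)]
      integrable_if_L2_set_bounded[OF fin I _ meas(2) bound(2)]
    by (intro L2_set_cong) auto
  also have "\<dots> \<le> \<delta>"
    using meas diff by (intro L2_set_integral_le_const[OF N I]) auto
  finally show ?thesis .
qed

lemma distr_pair_snd:
  assumes "prob_space M" and "sigma_finite_measure N"
  shows "distr (M \<Otimes>\<^sub>M N) N snd = N"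
proof (intro measure_eqI)
  interpret M: prob_space M by fact
  interpret N: sigma_finite_measure N by fact
  fix A assume A: "A \<in> sets (distr (M \<Otimes>\<^sub>M N) N snd)"
  then have "emeasure (distr (M \<Otimes>\<^sub>M N) N snd) A = emeasure (M \<Otimes>\<^sub>M N) (space M \<times> A)"
    by (auto simp: emeasure_distr space_pair_measure dest: sets.sets_into_space
        intro!: arg_cong2[where f = emeasure])
  with A show "emeasure (distr (M \<Otimes>\<^sub>M N) N snd) A = emeasure N A"
    by (simp add: N.emeasure_pair_measure_Times M.emeasure_space_1)
qed simp

lemma pair_measure_in_couplings:
  assumes "prob_space \<mu>" "sets \<mu> = sets (Rd d)" and "prob_space \<mu>'" "sets \<mu>' = sets (Rd d)"
  shows "\<mu> \<Otimes>\<^sub>M \<mu>' \<in> couplings d \<mu> \<mu>'"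
proof -
  have "distr (\<mu> \<Otimes>\<^sub>M \<mu>') (Rd d) fst = distr (\<mu> \<Otimes>\<^sub>M \<mu>') \<mu> fst"
    by (rule distr_cong) (use assms in auto)
  also have "\<dots> = \<mu>"
    by (rule prob_space.distr_pair_fst[OF assms(3)])
  finally have "distr (\<mu> \<Otimes>\<^sub>M \<mu>') (Rd d) fst = \<mu>" .
  moreover have "distr (\<mu> \<Otimes>\<^sub>M \<mu>') (Rd d) snd = distr (\<mu> \<Otimes>\<^sub>M \<mu>') \<mu>' snd"
    by (rule distr_cong) (use assms in auto)
  moreover have "\<dots> = \<mu>'"
    by (rule distr_pair_snd[OF assms(1) prob_space_imp_sigma_finite[OF assms(3)]])
  moreover have "prob_space (\<mu> \<Otimes>\<^sub>M \<mu>')" "sets (\<mu> \<Otimes>\<^sub>M \<mu>') = sets (Rd d \<Otimes>\<^sub>M Rd d)"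
    using assms by (auto intro: prob_space_pair sets_pair_measure_cong)
  ultimately show ?thesis
    by (simp add: couplings_def)
qed

lemma couplingsD:
  assumes "\<pi> \<in> couplings d \<mu> \<mu>'"
  shows "prob_space \<pi>" and "measurable \<pi> N = measurable (Rd d \<Otimes>\<^sub>M Rd d) N"
    and "distr \<pi> (Rd d) fst = \<mu>" and "distr \<pi> (Rd d) snd = \<mu>'"
  using assms measurable_cong_sets[of \<pi> "Rd d \<Otimes>\<^sub>M Rd d" N N] by (auto simp: couplings_def)

lemma couplings_supported:
  assumes \<pi>: "\<pi> \<in> couplings d \<mu> \<mu>'" and "prob_supp d R \<mu>" "prob_supp d R \<mu>'"
  shows "AE p in \<pi>. vnorm d (fst p) \<le> R \<and> vnorm d (snd p) \<le> R"
proof -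
  have "AE y in distr \<pi> (Rd d) fst. vnorm d y \<le> R" "AE y in distr \<pi> (Rd d) snd. vnorm d y \<le> R"
    using assms(2,3) by (simp_all add: couplingsD[OF \<pi>] prob_suppD)
  then show ?thesis
    by (simp add: AE_distr_iff couplingsD(2)[OF \<pi>])
qed

lemma coupling_cost_integrable:
  assumes \<pi>: "\<pi> \<in> couplings d \<mu> \<mu>'" and "prob_supp d R \<mu>" "prob_supp d R \<mu>'"
  shows "integrable \<pi> (\<lambda>p. vdist d (fst p) (snd p))"
proof -
  interpret prob_space \<pi>
    by (rule couplingsD(1)[OF \<pi>])
  show ?thesis
  proof (rule integrable_const_bound[where B = "R + R"])
    show "AE p in \<pi>. norm (vdist d (fst p) (snd p)) \<le> R + R"
      using couplings_supported[OF assms]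
    proof eventually_elim
      case (elim p)
      then show ?case
        using vdist_le_vnorm_add[of d "fst p" "snd p"] by (simp add: vdist_nonneg)
    qed
    show "(\<lambda>p. vdist d (fst p) (snd p)) \<in> borel_measurable \<pi>"
      by (simp add: couplingsD(2)[OF \<pi>] borel_measurable_vdist_pair)
  qed
qed

lemma integral_couplings_diff:
  fixes g :: "(nat \<Rightarrow> real) \<Rightarrow> real"
  assumes \<pi>: "\<pi> \<in> couplings d \<mu> \<mu>'" and "prob_supp d R \<mu>" "prob_supp d R \<mu>'"
    and meas: "g \<in> borel_measurable (Rd d)" and bound: "\<And>y. vnorm d y \<le> R \<Longrightarrow> \<bar>g y\<bar> \<le> B"
  shows "integrable \<pi> (\<lambda>p. g (fst p) - g (snd p))"
    and "(\<integral>y. g y \<partial>\<mu>) - (\<integral>y. g y \<partial>\<mu>') = (\<integral>p. g (fst p) - g (snd p) \<partial>\<pi>)"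
proof -
  interpret prob_space \<pi>
    by (rule couplingsD(1)[OF \<pi>])
  have integrable: "integrable \<pi> (\<lambda>p. g (f p))"
    if "f \<in> measurable \<pi> (Rd d)" "AE p in \<pi>. vnorm d (f p) \<le> R" for f
    using that(2) by (intro integrable_const_bound[where B = B] measurable_compose[OF that(1) meas])
      (auto elim!: eventually_mono intro: bound)
  have "fst \<in> measurable \<pi> (Rd d)" "snd \<in> measurable \<pi> (Rd d)"
    by (simp_all add: couplingsD(2)[OF \<pi>])
  moreover have "AE p in \<pi>. vnorm d (fst p) \<le> R" "AE p in \<pi>. vnorm d (snd p) \<le> R"
    using couplings_supported[OF assms(1-3)] by (simp_all add: eventually_conj_iff)
  ultimately have "integrable \<pi> (\<lambda>p. g (fst p))" "integrable \<pi> (\<lambda>p. g (snd p))"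
    and "(\<integral>y. g y \<partial>\<mu>) = (\<integral>p. g (fst p) \<partial>\<pi>)" "(\<integral>y. g y \<partial>\<mu>') = (\<integral>p. g (snd p) \<partial>\<pi>)"
    using integral_distr[OF _ meas] by (auto intro: integrable simp flip: couplingsD(3,4)[OF \<pi>])
  then show "integrable \<pi> (\<lambda>p. g (fst p) - g (snd p))"
    and "(\<integral>y. g y \<partial>\<mu>) - (\<integral>y. g y \<partial>\<mu>') = (\<integral>p. g (fst p) - g (snd p) \<partial>\<pi>)"
    by simp_all
qed

text \<open>The product coupling has finite cost, so the infimum in \<open>W1\<close> is finite and
  \<open>enn2real\<close> does not collapse it to \<open>0\<close>.\<close>

lemma le_mult_W1I:
  assumes \<mu>: "prob_supp d R \<mu>" and \<mu>': "prob_supp d R \<mu>'" and "0 \<le> L"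
    and le: "\<And>\<pi>. \<pi> \<in> couplings d \<mu> \<mu>' \<Longrightarrow> c \<le> L * (\<integral>p. vdist d (fst p) (snd p) \<partial>\<pi>)"
  shows "c \<le> L * W1 d \<mu> \<mu>'"
proof -
  define J where "J = (INF \<pi>\<in>couplings d \<mu> \<mu>'. \<integral>\<^sup>+ p. ennreal (vdist d (fst p) (snd p)) \<partial>\<pi>)"
  have cost: "(\<integral>\<^sup>+ p. ennreal (vdist d (fst p) (snd p)) \<partial>\<pi>) = ennreal (\<integral>p. vdist d (fst p) (snd p) \<partial>\<pi>)"
    if "\<pi> \<in> couplings d \<mu> \<mu>'" for \<pi>
    using coupling_cost_integrable[OF that \<mu> \<mu>'] by (simp add: nn_integral_eq_integral vdist_nonneg)
  have product: "\<mu> \<Otimes>\<^sub>M \<mu>' \<in> couplings d \<mu> \<mu>'"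
    using prob_suppD(1,2)[OF \<mu>] prob_suppD(1,2)[OF \<mu>'] by (rule pair_measure_in_couplings)
  then have "J < \<top>"
    unfolding J_def by (rule INF_lower[THEN le_less_trans]) (simp add: cost[OF product])
  show ?thesis
  proof (cases "L = 0")
    case True
    then show ?thesis
      using le[OF product] by simp
  next
    case False
    with \<open>0 \<le> L\<close> have "0 < L"
      by simp
    have "ennreal (c / L) \<le> J"
      unfolding J_def
    proof (rule INF_greatest)
      fix \<pi> assume "\<pi> \<in> couplings d \<mu> \<mu>'"
      then show "ennreal (c / L) \<le> (\<integral>\<^sup>+ p. ennreal (vdist d (fst p) (snd p)) \<partial>\<pi>)"
        using le \<open>0 < L\<close> by (auto simp: cost divide_le_eq mult.commute intro: ennreal_leI)
    qed
    then have "c / L \<le> enn2real J"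
      using \<open>J < \<top>\<close> enn2real_mono
      by (cases "0 \<le> c / L") (force intro: order_trans[OF _ enn2real_nonneg])+
    then show ?thesis
      using \<open>0 < L\<close> by (simp add: W1_def J_def divide_le_eq mult.commute)
  qed
qed

lemma W1_nonneg: "0 \<le> W1 d \<mu> \<mu>'"
  by (simp add: W1_def)

lemma L2_set_integral_diff_le_W1:
  fixes g :: "(nat \<Rightarrow> real) \<Rightarrow> 'i \<Rightarrow> real"
  assumes \<mu>: "prob_supp d R \<mu>" and \<mu>': "prob_supp d R \<mu>'" and I: "finite I"
    and meas: "\<And>k. (\<lambda>y. g y k) \<in> borel_measurable (Rd d)"
    and bound: "\<And>y. vnorm d y \<le> R \<Longrightarrow> L2_set (g y) I \<le> B"
    and lip: "\<And>y y'. vnorm d y \<le> R \<Longrightarrow> vnorm d y' \<le> R \<Longrightarrow>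
      L2_set (\<lambda>k. g y k - g y' k) I \<le> K * vdist d y y'"
    and "0 \<le> K"
  shows "L2_set (\<lambda>k. (\<integral>y. g y k \<partial>\<mu>) - (\<integral>y. g y k \<partial>\<mu>')) I \<le> K * W1 d \<mu> \<mu>'"
proof (rule le_mult_W1I[OF \<mu> \<mu>' \<open>0 \<le> K\<close>])
  fix \<pi> assume \<pi>: "\<pi> \<in> couplings d \<mu> \<mu>'"
  have "L2_set (\<lambda>k. (\<integral>y. g y k \<partial>\<mu>) - (\<integral>y. g y k \<partial>\<mu>')) I
      = L2_set (\<lambda>k. \<integral>p. g (fst p) k - g (snd p) k \<partial>\<pi>) I"
    using abs_le_L2_set[OF I] bound
    by (intro L2_set_cong integral_couplings_diff(2)[OF \<pi> \<mu> \<mu>' meas, where B = B])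
      (auto intro: order_trans)
  also have "\<dots> \<le> (\<integral>p. K * vdist d (fst p) (snd p) \<partial>\<pi>)"
  proof (rule L2_set_integral_le[OF I])
    show "integrable \<pi> (\<lambda>p. g (fst p) k - g (snd p) k)" if "k \<in> I" for k
      using abs_le_L2_set[OF I that] bound
      by (intro integral_couplings_diff(1)[OF \<pi> \<mu> \<mu>' meas, where B = B]) (auto intro: order_trans)
    show "integrable \<pi> (\<lambda>p. K * vdist d (fst p) (snd p))"
      using coupling_cost_integrable[OF \<pi> \<mu> \<mu>'] by simp
    show "AE p in \<pi>. L2_set (\<lambda>k. g (fst p) k - g (snd p) k) I \<le> K * vdist d (fst p) (snd p)"
      using couplings_supported[OF \<pi> \<mu> \<mu>'] by eventually_elim (simp add: lip)
  qed
  finally show "L2_set (\<lambda>k. (\<integral>y. g y k \<partial>\<mu>) - (\<integral>y. g y k \<partial>\<mu>')) I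
      \<le> K * (\<integral>p. vdist d (fst p) (snd p) \<partial>\<pi>)"
    by simp
qed

definition field_dom :: "real \<Rightarrow> real \<Rightarrow> nat \<Rightarrow> (params \<times> (nat \<Rightarrow> real) \<times> (nat \<Rightarrow> real) measure) set" where
  "field_dom M R d = {(\<theta>, x, \<mu>). pnorm d \<theta> \<le> M \<and> vnorm d x \<le> R \<and> prob_supp d R \<mu>}"

definition field_dist :: "nat \<Rightarrow> params \<times> (nat \<Rightarrow> real) \<times> (nat \<Rightarrow> real) measure
    \<Rightarrow> params \<times> (nat \<Rightarrow> real) \<times> (nat \<Rightarrow> real) measure \<Rightarrow> real" where
  "field_dist d = (\<lambda>(\<theta>, x, \<mu>) (\<theta>', x', \<mu>'). vdist d x x' + W1 d \<mu> \<mu>' + pdist d \<theta> \<theta>')"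

lemma L2_set_kernel_integral_diff_le:
  fixes h :: "params \<times> (nat \<Rightarrow> real) \<times> (nat \<Rightarrow> real) \<Rightarrow> 'i \<Rightarrow> real"
  assumes I: "finite I" and meas: "\<And>\<theta> x k. (\<lambda>y. h (\<theta>, x, y) k) \<in> borel_measurable (Rd d)"
    and bound: "\<And>p. p \<in> kernel_dom M R d \<Longrightarrow> L2_set (h p) I \<le> B"
    and lip: "\<And>p q. p \<in> kernel_dom M R d \<Longrightarrow> q \<in> kernel_dom M R d \<Longrightarrow>
      L2_set (\<lambda>k. h p k - h q k) I \<le> K * kernel_dist d p q"
    and "0 \<le> K" and dom: "(\<theta>, x, \<mu>) \<in> field_dom M R d" "(\<theta>', x', \<mu>') \<in> field_dom M R d"
  shows "L2_set (\<lambda>k. (\<integral>y. h (\<theta>, x, y) k \<partial>\<mu>) - (\<integral>y. h (\<theta>', x', y) k \<partial>\<mu>')) I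
    \<le> K * field_dist d (\<theta>, x, \<mu>) (\<theta>', x', \<mu>')"
proof -
  have \<theta>x: "pnorm d \<theta> \<le> M" "vnorm d x \<le> R" "pnorm d \<theta>' \<le> M" "vnorm d x' \<le> R"
    and \<mu>: "prob_supp d R \<mu>" and \<mu>': "prob_supp d R \<mu>'"
    using dom by (auto simp: field_dom_def)
  let ?F = "\<lambda>\<theta> x \<mu> k. \<integral>y. h (\<theta>, x, y) k \<partial>\<mu>"
  have "L2_set (\<lambda>k. ?F \<theta> x \<mu> k - ?F \<theta>' x' \<mu>' k) I
      = L2_set (\<lambda>k. (?F \<theta> x \<mu> k - ?F \<theta> x \<mu>' k) + (?F \<theta> x \<mu>' k - ?F \<theta>' x' \<mu>' k)) I"
    by (rule L2_set_cong) auto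
  also have "\<dots> \<le> L2_set (\<lambda>k. ?F \<theta> x \<mu> k - ?F \<theta> x \<mu>' k) I + L2_set (\<lambda>k. ?F \<theta> x \<mu>' k - ?F \<theta>' x' \<mu>' k) I"
    by (rule L2_set_triangle_ineq)
  also have "\<dots> \<le> K * W1 d \<mu> \<mu>' + K * (vdist d x x' + pdist d \<theta> \<theta>')"
  proof (rule add_mono)
    have "L2_set (\<lambda>k. h (\<theta>, x, y) k - h (\<theta>, x, y') k) I \<le> K * vdist d y y'"
      if "vnorm d y \<le> R" "vnorm d y' \<le> R" for y y'
      using lip[of "(\<theta>, x, y)" "(\<theta>, x, y')"] that \<theta>x by (simp add: kernel_dom_def kernel_dist_def)
    then show "L2_set (\<lambda>k. ?F \<theta> x \<mu> k - ?F \<theta> x \<mu>' k) I \<le> K * W1 d \<mu> \<mu>'"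
      using \<theta>x \<open>0 \<le> K\<close>
      by (intro L2_set_integral_diff_le_W1[OF \<mu> \<mu>' I meas, where B = B])
        (auto intro: bound simp: kernel_dom_def)
    have "L2_set (\<lambda>k. h (\<theta>, x, y) k - h (\<theta>', x', y) k) I \<le> K * (vdist d x x' + pdist d \<theta> \<theta>')"
      if "vnorm d y \<le> R" for y
      using lip[of "(\<theta>, x, y)" "(\<theta>', x', y)"] that \<theta>x by (simp add: kernel_dom_def kernel_dist_def)
    then show "L2_set (\<lambda>k. ?F \<theta> x \<mu>' k - ?F \<theta>' x' \<mu>' k) I \<le> K * (vdist d x x' + pdist d \<theta> \<theta>')"
      using prob_suppD(3)[OF \<mu>'] \<theta>x
      by (intro L2_set_integral_diff_le[OF prob_suppD(1)[OF \<mu>'] I, where B = B]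
          measurable_prob_supp[OF \<mu>' meas])
        (auto elim!: eventually_mono intro: bound simp: kernel_dom_def)
  qed
  finally show ?thesis
    by (simp add: field_dist_def algebra_simps)
qed

lemma uniformly_bounded_lipschitz_integral:
  assumes h: "uniformly_bounded_lipschitz (kernel_dom M R) kernel_dist I h"
    and fin: "\<And>d. finite (I d)"
    and meas: "\<And>d \<theta> x k. (\<lambda>y. h d (\<theta>, x, y) k) \<in> borel_measurable (Rd d)"
  shows "uniformly_bounded_lipschitz (field_dom M R) field_dist I
    (\<lambda>d (\<theta>, x, \<mu>) k. \<integral>y. h d (\<theta>, x, y) k \<partial>\<mu>)"
proof -
  obtain B K where "0 \<le> B" "0 \<le> K"
    and bound: "\<And>d p. p \<in> kernel_dom M R d \<Longrightarrow> L2_set (h d p) (I d) \<le> B"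
    and lip: "\<And>d p q. p \<in> kernel_dom M R d \<Longrightarrow> q \<in> kernel_dom M R d \<Longrightarrow>
      L2_set (\<lambda>k. h d p k - h d q k) (I d) \<le> K * kernel_dist d p q"
    using h by (elim uniformly_bounded_lipschitzE) blast
  show ?thesis
  proof (rule uniformly_bounded_lipschitzI[of B K])
    fix d p assume "p \<in> field_dom M R d"
    then obtain \<theta> x \<mu> where p: "p = (\<theta>, x, \<mu>)" and "pnorm d \<theta> \<le> M" "vnorm d x \<le> R"
      and \<mu>: "prob_supp d R \<mu>"
      by (auto simp: field_dom_def)
    then have "L2_set (\<lambda>k. \<integral>y. h d (\<theta>, x, y) k \<partial>\<mu>) (I d) \<le> B"
      using prob_suppD(3)[OF \<mu>]
      by (intro L2_set_integral_le_const prob_suppD(1)[OF \<mu>] fin measurable_prob_supp[OF \<mu> meas])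
        (auto elim!: eventually_mono intro: bound simp: kernel_dom_def)
    then show "L2_set ((\<lambda>d (\<theta>, x, \<mu>) k. \<integral>y. h d (\<theta>, x, y) k \<partial>\<mu>) d p) (I d) \<le> B"
      by (simp add: p)
  next
    fix d p q assume "p \<in> field_dom M R d" "q \<in> field_dom M R d"
    then show "L2_set (\<lambda>k. (\<lambda>d (\<theta>, x, \<mu>) k. \<integral>y. h d (\<theta>, x, y) k \<partial>\<mu>) d p k
        - (\<lambda>d (\<theta>, x, \<mu>) k. \<integral>y. h d (\<theta>, x, y) k \<partial>\<mu>) d q k) (I d) \<le> K * field_dist d p q"
      using L2_set_kernel_integral_diff_le[OF fin meas bound lip \<open>0 \<le> K\<close>] by (auto split: prod.splits)
  qed fact+
qed

section \<open>Differentiation under the integral sign\<close>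

lemma abs_exp_minus_one_minus_le:
  fixes u :: real
  shows "\<bar>exp u - 1 - u\<bar> \<le> exp \<bar>u\<bar> * u\<^sup>2"
proof -
  obtain t where t: "\<bar>t\<bar> \<le> \<bar>u\<bar>" and "exp u = (\<Sum>m<2. u ^ m / fact m) + exp t / fact 2 * u ^ 2"
    using Maclaurin_exp_le by blast
  then have "\<bar>exp u - 1 - u\<bar> = exp t / 2 * u\<^sup>2"
    by (simp add: numeral_2_eq_2)
  also have "\<dots> \<le> exp \<bar>u\<bar> * u\<^sup>2"
  proof (rule mult_right_mono)
    have "exp t \<le> exp \<bar>u\<bar>"
      using t abs_ge_self[of t] by (subst exp_le_cancel_iff) linarith
    then show "exp t / 2 \<le> exp \<bar>u\<bar>"
      using exp_gt_zero[of t] by linarith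
  qed simp
  finally show ?thesis .
qed

lemma has_real_derivative_at_0_if_quadratic_remainder:
  fixes F :: "real \<Rightarrow> real"
  assumes "\<And>h. h \<noteq> 0 \<Longrightarrow> \<bar>h\<bar> \<le> 1 \<Longrightarrow> \<bar>F h - F 0 - h * D\<bar> \<le> K * h\<^sup>2"
  shows "(F has_real_derivative D) (at 0)"
proof -
  have "\<forall>\<^sub>F h in at 0. norm ((F (0 + h) - F 0) / h - D) \<le> K * \<bar>h\<bar>"
    unfolding eventually_at
  proof (intro exI[of _ 1] conjI ballI impI)
    fix h :: real assume "h \<noteq> 0 \<and> dist h 0 < 1"
    then have "h \<noteq> 0" "\<bar>h\<bar> \<le> 1"
      by auto
    have "(F h - F 0 - h * D) / h = (F h - F 0) / h - D"
      using \<open>h \<noteq> 0\<close> by (simp add: diff_divide_distrib)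
    then have "norm ((F (0 + h) - F 0) / h - D) = \<bar>F h - F 0 - h * D\<bar> / \<bar>h\<bar>"
      by (simp flip: abs_divide)
    also have "\<dots> \<le> K * (\<bar>h\<bar> * \<bar>h\<bar>) / \<bar>h\<bar>"
      using assms[OF \<open>h \<noteq> 0\<close> \<open>\<bar>h\<bar> \<le> 1\<close>] by (intro divide_right_mono) (simp_all add: power2_eq_square)
    also have "\<dots> = K * \<bar>h\<bar>"
      using \<open>h \<noteq> 0\<close> by (simp add: mult.assoc[symmetric] del: abs_mult_self_eq)
    finally show "norm ((F (0 + h) - F 0) / h - D) \<le> K * \<bar>h\<bar>" .
  qed simp
  moreover have "((\<lambda>h. K * \<bar>h\<bar>) \<longlongrightarrow> 0) (at 0)"
    by (intro tendsto_eq_intros) auto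
  ultimately have "((\<lambda>h. (F (0 + h) - F 0) / h - D) \<longlongrightarrow> 0) (at 0)"
    by (rule Lim_null_comparison)
  then show ?thesis
    unfolding DERIV_def by (rule LIM_zero_cancel)
qed

lemma abs_exp_mult_minus_one_minus_le:
  fixes h t C :: real
  assumes "\<bar>h\<bar> \<le> 1" and "\<bar>t\<bar> \<le> C"
  shows "\<bar>exp (h * t) - 1 - h * t\<bar> \<le> exp C * C\<^sup>2 * h\<^sup>2"
proof -
  have ht: "\<bar>h * t\<bar> \<le> C"
    using assms mult_mono[of "\<bar>h\<bar>" 1 "\<bar>t\<bar>" C] by (auto simp: abs_mult)
  have "\<bar>exp (h * t) - 1 - h * t\<bar> \<le> exp \<bar>h * t\<bar> * (h * t)\<^sup>2"
    by (rule abs_exp_minus_one_minus_le)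
  also have "\<dots> \<le> exp C * (C\<^sup>2 * h\<^sup>2)"
  proof (rule mult_mono)
    have "t\<^sup>2 \<le> C\<^sup>2"
      using power_mono[OF assms(2) abs_ge_zero, of 2] by simp
    then show "(h * t)\<^sup>2 \<le> C\<^sup>2 * h\<^sup>2"
      using mult_left_mono[of "t\<^sup>2" "C\<^sup>2" "h\<^sup>2"] by (simp add: power_mult_distrib mult.commute)
  qed (use ht in auto)
  finally show ?thesis
    by (simp add: mult.assoc)
qed

lemma bounded_mult_comp:
  fixes g c :: "'a \<Rightarrow> real"
  assumes "finite_measure N" and meas: "g \<in> borel_measurable N" "c \<in> borel_measurable N"
    and c: "AE y in N. \<bar>c y\<bar> \<le> C" and g: "AE y in N. \<bar>g y\<bar> \<le> G"
    and f: "f \<in> borel_measurable borel" "\<And>t. \<bar>t\<bar> \<le> C \<Longrightarrow> \<bar>f t\<bar> \<le> B"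
  shows "AE y in N. \<bar>g y * f (c y)\<bar> \<le> G * B" and "integrable N (\<lambda>y. g y * f (c y))"
proof -
  interpret finite_measure N by fact
  show bound: "AE y in N. \<bar>g y * f (c y)\<bar> \<le> G * B"
    using c g
  proof eventually_elim
    case (elim y)
    have "\<bar>f (c y)\<bar> \<le> B"
      by (rule f(2)[OF elim(1)])
    then show ?case
      unfolding abs_mult by (rule mult_mono'[OF elim(2) _ abs_ge_zero abs_ge_zero])
  qed
  show "integrable N (\<lambda>y. g y * f (c y))"
    using bound by (intro integrable_const_bound[where B = "G * B"] borel_measurable_times meas(1)
        measurable_compose[OF meas(2) f(1)]) simp_all
qed

lemma has_real_derivative_integral_mult_exp:
  fixes g c :: "'a \<Rightarrow> real"
  assumes N: "finite_measure N" and meas: "g \<in> borel_measurable N" "c \<in> borel_measurable N"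
    and c: "AE y in N. \<bar>c y\<bar> \<le> C" and g: "AE y in N. \<bar>g y\<bar> \<le> G"
  shows "((\<lambda>s. \<integral>y. g y * exp (s * c y) \<partial>N) has_real_derivative (\<integral>y. c y * g y \<partial>N)) (at 0)"
proof (rule has_real_derivative_at_0_if_quadratic_remainder)
  interpret finite_measure N
    by (rule N)
  note bounded = bounded_mult_comp[OF N meas c g]
  fix h :: real assume "h \<noteq> 0" "\<bar>h\<bar> \<le> 1"
  have "(\<integral>y. g y * exp (h * c y) \<partial>N) - (\<integral>y. g y * exp (0 * c y) \<partial>N) - h * (\<integral>y. c y * g y \<partial>N)
      = (\<integral>y. g y * (exp (h * c y) - 1 - h * c y) \<partial>N)"
  proof -
    have "\<bar>exp (h * t)\<bar> \<le> exp C" if "\<bar>t\<bar> \<le> C" for t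
    proof -
      have "\<bar>h * t\<bar> \<le> C"
        using that \<open>\<bar>h\<bar> \<le> 1\<close> mult_mono[of "\<bar>h\<bar>" 1 "\<bar>t\<bar>" C] by (auto simp: abs_mult)
      then show ?thesis
        using abs_ge_self[of "h * t"] by simp
    qed
    then have "integrable N (\<lambda>y. g y * exp (h * c y))"
      by (intro bounded(2)) auto
    moreover have "integrable N (\<lambda>y. g y * 1)" "integrable N (\<lambda>y. g y * c y)"
      by (intro bounded(2)[where B = 1]; simp) (intro bounded(2)[where B = C]; simp)
    ultimately show ?thesis
      by (simp add: algebra_simps)
  qed
  also have "\<bar>\<dots>\<bar> \<le> (\<integral>y. \<bar>g y * (exp (h * c y) - 1 - h * c y)\<bar> \<partial>N)"
    by (rule integral_abs_bound)
  also have "\<dots> \<le> (\<integral>y. G * (exp C * C\<^sup>2 * h\<^sup>2) \<partial>N)"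
  proof (rule integral_mono_AE')
    show "AE y in N. \<bar>g y * (exp (h * c y) - 1 - h * c y)\<bar> \<le> G * (exp C * C\<^sup>2 * h\<^sup>2)"
      using \<open>\<bar>h\<bar> \<le> 1\<close> by (intro bounded(1)) (auto intro: abs_exp_mult_minus_one_minus_le)
    then show "AE y in N. 0 \<le> G * (exp C * C\<^sup>2 * h\<^sup>2)"
      by eventually_elim (rule order_trans[OF abs_ge_zero])
  qed simp
  finally show "\<bar>(\<integral>y. g y * exp (h * c y) \<partial>N) - (\<integral>y. g y * exp (0 * c y) \<partial>N) - h * (\<integral>y. c y * g y \<partial>N)\<bar>
      \<le> measure N (space N) * (G * (exp C * C\<^sup>2)) * h\<^sup>2"
    by (simp add: mult_ac)
qed

section \<open>The Jacobian as a Gibbs covariance\<close>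

definition gibbs_integral :: "nat \<Rightarrow> params \<Rightarrow> (nat \<Rightarrow> real) \<Rightarrow> (nat \<Rightarrow> real) measure
    \<Rightarrow> ((nat \<Rightarrow> real) \<Rightarrow> real) \<Rightarrow> real" where
  "gibbs_integral d \<theta> x \<mu> f = (\<integral>y. exp (score d \<theta> x y) * f y \<partial>\<mu>)"

definition gibbs_mean :: "nat \<Rightarrow> params \<Rightarrow> (nat \<Rightarrow> real) \<Rightarrow> (nat \<Rightarrow> real) measure
    \<Rightarrow> ((nat \<Rightarrow> real) \<Rightarrow> real) \<Rightarrow> real" where
  "gibbs_mean d \<theta> x \<mu> f = gibbs_integral d \<theta> x \<mu> f / gibbs_integral d \<theta> x \<mu> (\<lambda>_. 1)"

lemma borel_measurable_score: "(\<lambda>y. score d \<theta> x y) \<in> borel_measurable (Rd d)"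
  unfolding score_def
  by (intro borel_measurable_vinner borel_measurable_mvmul measurable_Rd_component) auto

lemma borel_measurable_value: "(\<lambda>y. mvmul d (vmat \<theta>) y i) \<in> borel_measurable (Rd d)"
  by (intro borel_measurable_mvmul measurable_Rd_component)

lemma borel_measurable_score_grad: "(\<lambda>y. score_grad d \<theta> y j) \<in> borel_measurable (Rd d)"
  unfolding score_grad_def by (intro borel_measurable_mvmul measurable_Rd_component)

lemma gibbs_normaliser_lower_bound:
  obtains m where "0 < m"
    and "\<And>d \<theta> x \<mu>. (\<theta>, x, \<mu>) \<in> field_dom M R d \<Longrightarrow> m \<le> gibbs_integral d \<theta> x \<mu> (\<lambda>_. 1)"
proof -
  obtain B where score: "\<And>d \<theta> x y. (\<theta>, x, y) \<in> kernel_dom M R d \<Longrightarrow> \<bar>score d \<theta> x y\<bar> \<le> B"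
    using uniformly_bounded_lipschitz_score[of M R]
    by (elim uniformly_bounded_lipschitz_abs_le)
      (metis (no_types, lifting) case_prod_conv finite.intros singletonI)
  have "exp (- B) \<le> gibbs_integral d \<theta> x \<mu> (\<lambda>_. 1)" if "(\<theta>, x, \<mu>) \<in> field_dom M R d" for d \<theta> x \<mu>
  proof -
    have \<mu>: "prob_supp d R \<mu>" and in_dom: "\<And>y. vnorm d y \<le> R \<Longrightarrow> (\<theta>, x, y) \<in> kernel_dom M R d"
      using that by (auto simp: field_dom_def kernel_dom_def)
    interpret prob_space \<mu>
      using prob_suppD(1)[OF \<mu>] .
    have ae: "AE y in \<mu>. exp (- B) \<le> exp (score d \<theta> x y) \<and> exp (score d \<theta> x y) \<le> exp B"
      using prob_suppD(3)[OF \<mu>]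
    proof eventually_elim
      case (elim y)
      then show ?case
        using score[OF in_dom[OF elim]] by (simp add: abs_le_iff)
    qed
    have "integrable \<mu> (\<lambda>y. exp (score d \<theta> x y))"
      using ae measurable_prob_supp[OF \<mu> borel_measurable_score]
      by (intro integrable_const_bound[where B = "exp B"]) (auto elim!: eventually_mono)
    then have "(\<integral>y. exp (- B) \<partial>\<mu>) \<le> (\<integral>y. exp (score d \<theta> x y) \<partial>\<mu>)"
      using ae by (intro integral_mono_AE) (auto elim!: eventually_mono)
    then show ?thesis
      by (simp add: gibbs_integral_def prob_space)
  qed
  then show thesis
    using that[of "exp (- B)"] by simp
qed

lemma mvmul_fun_upd:
  "i < d \<Longrightarrow> j < d \<Longrightarrow> mvmul d A (x(j := t)) i = mvmul d A x i + A i j * (t - x j)"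
proof -
  assume "i < d" "j < d"
  then have "(\<Sum>k<d. A i k * (x(j := t)) k)
      = (\<Sum>k<d. A i k * x k + (if k = j then A i j * (t - x j) else 0))"
    by (intro sum.cong) (auto simp: algebra_simps)
  with \<open>i < d\<close> \<open>j < d\<close> show ?thesis
    by (simp add: mvmul_def sum.distrib)
qed

lemma score_fun_upd:
  assumes "j < d"
  shows "score d \<theta> (x(j := t)) y = score d \<theta> x y + (t - x j) * score_grad d \<theta> y j"
proof -
  have "score d \<theta> (x(j := t)) y
      = (\<Sum>i<d. (mvmul d (qmat \<theta>) x i + qmat \<theta> i j * (t - x j)) * mvmul d (kmat \<theta>) y i)"
    unfolding score_def vinner_def using assms by (intro sum.cong) (auto simp: mvmul_fun_upd)
  also have "\<dots> = score d \<theta> x y + (t - x j) * (\<Sum>i<d. qmat \<theta> i j * mvmul d (kmat \<theta>) y i)"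
    unfolding score_def vinner_def sum_distrib_left sum.distrib[symmetric]
    by (intro sum.cong) (simp_all add: algebra_simps)
  finally show ?thesis
    using assms by (simp add: score_grad_def mvmul_def)
qed

lemma attn_eq_gibbs_mean:
  "i < d \<Longrightarrow> attn d x \<mu> \<theta> i = gibbs_mean d \<theta> x \<mu> (\<lambda>y. mvmul d (vmat \<theta>) y i)"
  by (cases \<theta>)
    (simp add: attn_def gibbs_mean_def gibbs_integral_def score_def qmat_def kmat_def vmat_def)

lemma has_real_derivative_gibbs_integral:
  assumes f: "uniformly_bounded_lipschitz (kernel_dom M R) kernel_dist I (\<lambda>d (\<theta>, x, y). f d \<theta> y)"
    and I: "finite (I d)" "k \<in> I d" and meas: "(\<lambda>y. f d \<theta> y k) \<in> borel_measurable (Rd d)"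
    and dom: "(\<theta>, x, \<mu>) \<in> field_dom M R d" and "j < d"
  shows "((\<lambda>t. gibbs_integral d \<theta> (x(j := t)) \<mu> (\<lambda>y. f d \<theta> y k)) has_real_derivative
    gibbs_integral d \<theta> x \<mu> (\<lambda>y. f d \<theta> y k * score_grad d \<theta> y j)) (at (x j))"
proof -
  have \<mu>: "prob_supp d R \<mu>" and in_dom: "\<And>y. vnorm d y \<le> R \<Longrightarrow> (\<theta>, x, y) \<in> kernel_dom M R d"
    using dom by (auto simp: field_dom_def kernel_dom_def)
  obtain C where "\<And>d p k. p \<in> kernel_dom M R d \<Longrightarrow> finite {..<d} \<Longrightarrow> k \<in> {..<d} \<Longrightarrow>
      \<bar>(\<lambda>d (\<theta>, x, y). score_grad d \<theta> y) d p k\<bar> \<le> C"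
    using uniformly_bounded_lipschitz_score_grad[of M R]
    by (elim uniformly_bounded_lipschitz_abs_le) blast
  from this[of "(\<theta>, x, _)" d j] have C: "\<And>y. vnorm d y \<le> R \<Longrightarrow> \<bar>score_grad d \<theta> y j\<bar> \<le> C"
    using in_dom \<open>j < d\<close> by simp
  obtain G where "\<And>d p k. p \<in> kernel_dom M R d \<Longrightarrow> finite (I d) \<Longrightarrow> k \<in> I d \<Longrightarrow>
      \<bar>(\<lambda>d (\<theta>, x, y) k. exp (score d \<theta> x y) * f d \<theta> y k) d p k\<bar> \<le> G"
    using uniformly_bounded_lipschitz_gibbs_weighted[OF f]
    by (elim uniformly_bounded_lipschitz_abs_le) blast
  from this[of "(\<theta>, x, _)" d k] have G: "\<And>y. vnorm d y \<le> R \<Longrightarrow> \<bar>exp (score d \<theta> x y) * f d \<theta> y k\<bar> \<le> G"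
    using in_dom I by simp
  txt \<open>By \<open>score_fun_upd\<close>, moving \<open>x j\<close> by \<open>s\<close> multiplies the Gibbs weight by
    \<open>exp (s * score_grad d \<theta> y j)\<close>.\<close>
  have "((\<lambda>s. \<integral>y. (exp (score d \<theta> x y) * f d \<theta> y k) * exp (s * score_grad d \<theta> y j) \<partial>\<mu>)
      has_real_derivative (\<integral>y. score_grad d \<theta> y j * (exp (score d \<theta> x y) * f d \<theta> y k) \<partial>\<mu>)) (at 0)"
  proof (rule has_real_derivative_integral_mult_exp)
    show "finite_measure \<mu>"
      using prob_suppD(1)[OF \<mu>] by (simp add: prob_space_def)
    show "AE y in \<mu>. \<bar>score_grad d \<theta> y j\<bar> \<le> C" "AE y in \<mu>. \<bar>exp (score d \<theta> x y) * f d \<theta> y k\<bar> \<le> G"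
      using prob_suppD(3)[OF \<mu>] by (auto elim!: eventually_mono intro: C G)
    show "(\<lambda>y. score_grad d \<theta> y j) \<in> borel_measurable \<mu>"
      by (intro measurable_prob_supp[OF \<mu>] borel_measurable_score_grad)
    show "(\<lambda>y. exp (score d \<theta> x y) * f d \<theta> y k) \<in> borel_measurable \<mu>"
      by (intro measurable_prob_supp[OF \<mu>] borel_measurable_times meas
          measurable_compose[OF borel_measurable_score borel_measurable_exp])
  qed
  then show ?thesis
    using DERIV_shift[where x = "x j" and z = "- x j"] \<open>j < d\<close>
    by (simp add: gibbs_integral_def score_fun_upd exp_add mult_ac)
qed

lemma DxV_eq_gibbs_covariance:
  assumes dom: "(\<theta>, x, \<mu>) \<in> field_dom M R d" and "i < d" "j < d"
  shows "DxV d x \<mu> \<theta> i j = gibbs_mean d \<theta> x \<mu> (\<lambda>y. mvmul d (vmat \<theta>) y i * score_grad d \<theta> y j)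
    - gibbs_mean d \<theta> x \<mu> (\<lambda>y. mvmul d (vmat \<theta>) y i) * gibbs_mean d \<theta> x \<mu> (\<lambda>y. score_grad d \<theta> y j)"
proof -
  let ?I = "\<lambda>x f. gibbs_integral d \<theta> x \<mu> f" and ?v = "\<lambda>y. mvmul d (vmat \<theta>) y i"
  have dv: "((\<lambda>t. ?I (x(j := t)) ?v) has_real_derivative ?I x (\<lambda>y. ?v y * score_grad d \<theta> y j))
      (at (x j))"
    using \<open>i < d\<close> by (intro has_real_derivative_gibbs_integral[OF uniformly_bounded_lipschitz_value _ _
          borel_measurable_value dom \<open>j < d\<close>]) auto
  have d1: "((\<lambda>t. ?I (x(j := t)) (\<lambda>_. 1)) has_real_derivative ?I x (\<lambda>y. score_grad d \<theta> y j)) (at (x j))"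
    using has_real_derivative_gibbs_integral[OF uniformly_bounded_lipschitz_one_kernel, where k = "()"]
      dom \<open>j < d\<close> by simp
  obtain m where "0 < m" and "m \<le> ?I x (\<lambda>_. 1)"
    using gibbs_normaliser_lower_bound[of M R] dom by metis
  then have Z: "?I x (\<lambda>_. 1) \<noteq> 0"
    by simp
  have "(\<lambda>t. attn d (x(j := t)) \<mu> \<theta> i) = (\<lambda>t. ?I (x(j := t)) ?v / ?I (x(j := t)) (\<lambda>_. 1))"
    using \<open>i < d\<close> by (simp add: attn_eq_gibbs_mean gibbs_mean_def)
  moreover have "((\<lambda>t. ?I (x(j := t)) ?v / ?I (x(j := t)) (\<lambda>_. 1)) has_real_derivative
      (?I x (\<lambda>y. ?v y * score_grad d \<theta> y j) * ?I x (\<lambda>_. 1) - ?I x ?v * ?I x (\<lambda>y. score_grad d \<theta> y j))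
        / (?I x (\<lambda>_. 1) * ?I x (\<lambda>_. 1))) (at (x j))"
    using DERIV_divide[OF dv d1] Z by simp
  ultimately have "DxV d x \<mu> \<theta> i j = (?I x (\<lambda>y. ?v y * score_grad d \<theta> y j) * ?I x (\<lambda>_. 1)
      - ?I x ?v * ?I x (\<lambda>y. score_grad d \<theta> y j)) / (?I x (\<lambda>_. 1) * ?I x (\<lambda>_. 1))"
    unfolding DxV_def by (simp add: DERIV_imp_deriv)
  moreover have "(P * Z - A * G) / (Z * Z) = P / Z - A / Z * (G / Z)" if "Z \<noteq> 0" for P A G Z :: real
    using that by (simp add: field_simps)
  ultimately show ?thesis
    using Z by (simp add: gibbs_mean_def)
qed

lemma uniformly_bounded_lipschitz_gibbs_mean:
  assumes f: "uniformly_bounded_lipschitz (kernel_dom M R) kernel_dist I (\<lambda>d (\<theta>, x, y). f d \<theta> y)"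
    and fin: "\<And>d. finite (I d)"
    and meas: "\<And>d \<theta> k. (\<lambda>y. f d \<theta> y k) \<in> borel_measurable (Rd d)"
  shows "uniformly_bounded_lipschitz (field_dom M R) field_dist I
    (\<lambda>d (\<theta>, x, \<mu>) k. gibbs_mean d \<theta> x \<mu> (\<lambda>y. f d \<theta> y k))"
proof -
  have weight: "(\<lambda>y. exp (score d \<theta> x y)) \<in> borel_measurable (Rd d)" for d \<theta> x
    by (rule measurable_compose[OF borel_measurable_score borel_measurable_exp])
  have numerator: "uniformly_bounded_lipschitz (field_dom M R) field_dist I
      (\<lambda>d (\<theta>, x, \<mu>) k. gibbs_integral d \<theta> x \<mu> (\<lambda>y. f d \<theta> y k))"
    by (rule uniformly_bounded_lipschitz_integral[OF
          uniformly_bounded_lipschitz_gibbs_weighted[OF f] fin,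
          THEN uniformly_bounded_lipschitz_cong])
      (auto simp: gibbs_integral_def intro!: borel_measurable_times weight meas)
  have normaliser: "uniformly_bounded_lipschitz (field_dom M R) field_dist (\<lambda>_. {()})
      (\<lambda>d (\<theta>, x, \<mu>) _. gibbs_integral d \<theta> x \<mu> (\<lambda>_. 1))"
    by (rule uniformly_bounded_lipschitz_integral[OF
          uniformly_bounded_lipschitz_gibbs_weighted[OF uniformly_bounded_lipschitz_one_kernel],
          THEN uniformly_bounded_lipschitz_cong]) (auto simp: gibbs_integral_def weight)
  obtain m where "0 < m"
    and m: "\<And>d \<theta> x \<mu>. (\<theta>, x, \<mu>) \<in> field_dom M R d \<Longrightarrow> m \<le> gibbs_integral d \<theta> x \<mu> (\<lambda>_. 1)"
    using gibbs_normaliser_lower_bound by blast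
  have "uniformly_bounded_lipschitz (field_dom M R) field_dist (\<lambda>_. {()})
      (\<lambda>d p k. 1 / (\<lambda>d (\<theta>, x, \<mu>) _. gibbs_integral d \<theta> x \<mu> (\<lambda>_. 1)) d p k)"
    using normaliser \<open>0 < m\<close> by (rule uniformly_bounded_lipschitz_inverse) (auto simp: m)
  from uniformly_bounded_lipschitz_scale[OF this numerator] show ?thesis
    by (rule uniformly_bounded_lipschitz_cong) (auto simp: gibbs_mean_def)
qed

lemma uniformly_bounded_lipschitz_DxV:
  "uniformly_bounded_lipschitz (field_dom M R) field_dist (\<lambda>d. {..<d} \<times> {..<d})
    (\<lambda>d (\<theta>, x, \<mu>). case_prod (DxV d x \<mu> \<theta>))"
proof -
  have "uniformly_bounded_lipschitz (kernel_dom M R) kernel_dist (\<lambda>d. {..<d} \<times> {..<d})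
      (\<lambda>d (\<theta>, x, y) (i, j). mvmul d (vmat \<theta>) y i * score_grad d \<theta> y j)"
    using uniformly_bounded_lipschitz_outer[OF
        uniformly_bounded_lipschitz_value uniformly_bounded_lipschitz_score_grad]
    by (rule uniformly_bounded_lipschitz_cong) (auto split: prod.splits)
  then have mean_product: "uniformly_bounded_lipschitz (field_dom M R) field_dist (\<lambda>d. {..<d} \<times> {..<d})
      (\<lambda>d (\<theta>, x, \<mu>) (i, j). gibbs_mean d \<theta> x \<mu> (\<lambda>y. mvmul d (vmat \<theta>) y i * score_grad d \<theta> y j))"
    by (rule uniformly_bounded_lipschitz_gibbs_mean[THEN uniformly_bounded_lipschitz_cong])
      (auto intro!: borel_measurable_times borel_measurable_value borel_measurable_score_grad
        split: prod.splits)
  have mean_value: "uniformly_bounded_lipschitz (field_dom M R) field_dist (\<lambda>d. {..<d})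
      (\<lambda>d (\<theta>, x, \<mu>) i. gibbs_mean d \<theta> x \<mu> (\<lambda>y. mvmul d (vmat \<theta>) y i))"
    by (rule uniformly_bounded_lipschitz_gibbs_mean[OF uniformly_bounded_lipschitz_value])
      (simp_all add: borel_measurable_value)
  have mean_grad: "uniformly_bounded_lipschitz (field_dom M R) field_dist (\<lambda>d. {..<d})
      (\<lambda>d (\<theta>, x, \<mu>) j. gibbs_mean d \<theta> x \<mu> (\<lambda>y. score_grad d \<theta> y j))"
    by (rule uniformly_bounded_lipschitz_gibbs_mean[OF uniformly_bounded_lipschitz_score_grad])
      (simp_all add: borel_measurable_score_grad)
  from uniformly_bounded_lipschitz_diff[OF
      mean_product uniformly_bounded_lipschitz_outer[OF mean_value mean_grad]]
  show ?thesis
    by (rule uniformly_bounded_lipschitz_cong) (auto simp: field_dom_def DxV_eq_gibbs_covariance)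
qed

lemma DxV_bounded_lipschitz:
  obtains L where "\<And>d \<theta> x \<mu> \<theta>' x' \<mu>'. (\<theta>, x, \<mu>) \<in> field_dom M R d \<Longrightarrow> (\<theta>', x', \<mu>') \<in> field_dom M R d \<Longrightarrow>
    opnorm d (DxV d x \<mu> \<theta>) \<le> L \<and>
    opnorm d (\<lambda>i j. DxV d x \<mu> \<theta> i j - DxV d x' \<mu>' \<theta>' i j) \<le> L * field_dist d (\<theta>, x, \<mu>) (\<theta>', x', \<mu>')"
proof -
  obtain B K where bound: "\<And>d p. p \<in> field_dom M R d \<Longrightarrow>
      L2_set ((\<lambda>d (\<theta>, x, \<mu>). case_prod (DxV d x \<mu> \<theta>)) d p) ({..<d} \<times> {..<d}) \<le> B"
    and lip: "\<And>d p q. p \<in> field_dom M R d \<Longrightarrow> q \<in> field_dom M R d \<Longrightarrow>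
      L2_set (\<lambda>k. (\<lambda>d (\<theta>, x, \<mu>). case_prod (DxV d x \<mu> \<theta>)) d p k
        - (\<lambda>d (\<theta>, x, \<mu>). case_prod (DxV d x \<mu> \<theta>)) d q k) ({..<d} \<times> {..<d}) \<le> K * field_dist d p q"
    using uniformly_bounded_lipschitz_DxV[of M R] by (elim uniformly_bounded_lipschitzE) blast
  show thesis
  proof (rule that[of "max B K"], rule conjI)
    fix d \<theta> x \<mu> \<theta>' x' \<mu>'
    assume p: "(\<theta>, x, \<mu>) \<in> field_dom M R d" and q: "(\<theta>', x', \<mu>') \<in> field_dom M R d"
    show "opnorm d (DxV d x \<mu> \<theta>) \<le> max B K"
      using opnorm_le_L2_set[of d "DxV d x \<mu> \<theta>"] bound[OF p] by simp
    have "opnorm d (\<lambda>i j. DxV d x \<mu> \<theta> i j - DxV d x' \<mu>' \<theta>' i j)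
        \<le> K * field_dist d (\<theta>, x, \<mu>) (\<theta>', x', \<mu>')"
      using opnorm_le_L2_set[of d "\<lambda>i j. DxV d x \<mu> \<theta> i j - DxV d x' \<mu>' \<theta>' i j"] lip[OF p q]
      by (simp add: case_prod_beta')
    also have "\<dots> \<le> max B K * field_dist d (\<theta>, x, \<mu>) (\<theta>', x', \<mu>')"
      by (auto simp: field_dist_def
          intro!: mult_right_mono add_nonneg_nonneg vdist_nonneg W1_nonneg pdist_nonneg)
    finally show "opnorm d (\<lambda>i j. DxV d x \<mu> \<theta> i j - DxV d x' \<mu>' \<theta>' i j)
        \<le> max B K * field_dist d (\<theta>, x, \<mu>) (\<theta>', x', \<mu>')" .
  qed
qed

theorem propositionE3:
  fixes M R :: real
  shows "\<exists>L1::real. \<forall>(d::nat) x x' \<mu> \<mu>' \<theta> \<theta>'.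
     x \<in> vecs d \<and> x' \<in> vecs d \<and> vnorm d x \<le> R \<and> vnorm d x' \<le> R \<and>
     prob_supp d R \<mu> \<and> prob_supp d R \<mu>' \<and> pnorm d \<theta> \<le> M \<and> pnorm d \<theta>' \<le> M \<longrightarrow>
       opnorm d (DxV d x \<mu> \<theta>) \<le> L1 \<and>
       opnorm d (\<lambda>i j. DxV d x \<mu> \<theta> i j - DxV d x' \<mu>' \<theta>' i j)
         \<le> L1 * (vdist d x x' + W1 d \<mu> \<mu>' + pdist d \<theta> \<theta>')"
proof (rule DxV_bounded_lipschitz[of M R])
  fix L
  assume "\<And>d \<theta> x \<mu> \<theta>' x' \<mu>'. (\<theta>, x, \<mu>) \<in> field_dom M R d \<Longrightarrow> (\<theta>', x', \<mu>') \<in> field_dom M R d \<Longrightarrow>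
    opnorm d (DxV d x \<mu> \<theta>) \<le> L \<and>
    opnorm d (\<lambda>i j. DxV d x \<mu> \<theta> i j - DxV d x' \<mu>' \<theta>' i j) \<le> L * field_dist d (\<theta>, x, \<mu>) (\<theta>', x', \<mu>')"
  then show ?thesis
    by (intro exI[of _ L]) (auto simp: field_dom_def field_dist_def)
qed

end
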